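(* There is an absolute constant $C>0$ such that the following holds for every positive integer $n$. Let $N\ge \mathrm{tw}_8(Cn^3)$ and let $\phi:[N]^{(2)}\to\mathbb{R}$. Then there exist $S\subset[N]$ with $|S|=n$ and a function $\sigma:S^{(2)}\to\mathbb{R}$ such that $\sigma\sim\phi$ on $S$ (i.e. $\sigma\sim\phi|_{S^{(2)}}$) and $\sigma$ is exponentially separated.
   Context: $[N]=\{1,\dots,N\}$ with its natural order. For an ordered set $A$, $A^{(k)}=\{(a_1,\dots,a_k)\in A^k:a_1<\dots<a_k\}$. The tower function: $\mathrm{tw}_1(x)=x$, $\mathrm{tw}_k(x)=2^{\mathrm{tw}_{k-1}(x)}$. For functions $\phi,\phi':A^{(2)}\to\mathbb{R}$, write $\phi\sim\phi'$ if there exist $\rho_1,\rho_2:A\to\mathbb{R}$ with $\phi(a,b)=\phi'(a,b)-\rho_1(a)-\rho_2(b)$ for all $(a,b)\in A^{(2)}$. A function $\phi:B\to\mathbb{R}$ on a finite set $B$ is exponentially separated if either $\phi(b)\ge0$ for all $b\in B$ or $\phi(b)\le 0$ for all $b\in B$, and for any two distinct $b,b'\in B$ we have $|\phi(b)|\ge 2|\phi(b')|$ or $|\phi(b')|\ge 2|\phi(b)|$. *)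

theory Defs
  imports Complex_Main
begin

text \<open>Tower function: tw 1 x = x, tw (k+1) x = 2 powr (tw k x). (tw 0 is a dummy value.)\<close>
fun tw :: "nat \<Rightarrow> real \<Rightarrow> real" where
  "tw 0 x = x"
| "tw (Suc 0) x = x"
| "tw (Suc (Suc k)) x = 2 powr (tw (Suc k) x)"

definition pairs2 :: "'a::linorder set \<Rightarrow> ('a \<times> 'a) set" where
  "pairs2 A = {(a, b). a \<in> A \<and> b \<in> A \<and> a < b}"

definition equiv_on :: "'a::linorder set \<Rightarrow> ('a \<times> 'a \<Rightarrow> real) \<Rightarrow> ('a \<times> 'a \<Rightarrow> real) \<Rightarrow> bool" where
  "equiv_on A \<phi> \<phi>' \<longleftrightarrow> (\<exists>\<rho>1 \<rho>2 :: 'a \<Rightarrow> real.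
      \<forall>(a, b) \<in> pairs2 A. \<phi> (a, b) = \<phi>' (a, b) - \<rho>1 a - \<rho>2 b)"

definition exp_separated :: "'b set \<Rightarrow> ('b \<Rightarrow> real) \<Rightarrow> bool" where
  "exp_separated B \<phi> \<longleftrightarrow>
     ((\<forall>b\<in>B. \<phi> b \<ge> 0) \<or> (\<forall>b\<in>B. \<phi> b \<le> 0)) \<and>
     (\<forall>b\<in>B. \<forall>b'\<in>B. b \<noteq> b' \<longrightarrow> \<bar>\<phi> b\<bar> \<ge> 2 * \<bar>\<phi> b'\<bar> \<or> \<bar>\<phi> b'\<bar> \<ge> 2 * \<bar>\<phi> b\<bar>)"

end

theory Submission
  imports Defs "HOL-Library.Ramsey" "HOL-Library.FuncSet"
begin

(*
  The rectangle difference D(i, j, k, l) = phi(i, k) - phi(i, l) - phi(j, k) + phi(j, l) does not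
  change when phi(a, b) is replaced by phi(a, b) - rho1 a - rho2 b, and it determines phi up to such
  a change. Colour each 8-subset of [N] by the outcomes of all comparisons s * D <= r * D'
  (r, s in {0, 1, 4}) between rectangle differences spanned by its points. Ramsey's theorem with a
  tower-type bound yields 10 n + 20 points on which these outcomes depend only on the relative order
  of the points involved. Then all rectangle differences have one sign, say positive, and shifting
  a block of rows (or of columns) by one step either always multiplies D by at least 4 or always
  divides it by at least 4. For 10-spaced points a < b let core(a, b) be the unit rectangle at
  (a, b) on the growing side. A monotone map moving only a (or only b) by 2 stretches core(a, b) by
  at least 1 + 4 + 16 = 21 and fixes every other core, so by order invariance distinct cores differ
  by a factor of at least 4. In each of the four growth/decay cases there are rho1, rho2 with
  core(a, b) <= |sigma(a, b)| <= 2 core(a, b), and exponential separation follows.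
*)

section \<open>Ramsey's theorem for hypergraphs with a tower-type bound\<close>

lemma exists_large_fiber:
  assumes "finite P" "f ` P \<subseteq> K" "finite K" "card K \<le> q"
  shows "\<exists>v. card P \<le> q * card {x\<in>P. f x = v}"
proof (cases "P = {}")
  case False
  then obtain p where "p \<in> P" by blast
  have "\<exists>v. v \<in> f ` P \<and> (\<forall>w. w \<in> f ` P \<longrightarrow> card {x\<in>P. f x = w} \<le> card {x\<in>P. f x = v})"
    by (rule ex_has_greatest_nat[where k = "f p" and b = "Suc (card P)"])
      (use \<open>p \<in> P\<close> card_mono[OF assms(1)] in \<open>auto simp: less_Suc_eq_le\<close>)
  then obtain v where v: "\<forall>w\<in>f ` P. card {x\<in>P. f x = w} \<le> card {x\<in>P. f x = v}"
    by blast
  have "card P = card (\<Union>w\<in>f ` P. {x\<in>P. f x = w})"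
    by (rule arg_cong[where f = card]) auto
  also have "\<dots> = (\<Sum>w\<in>f ` P. card {x\<in>P. f x = w})"
    by (rule card_UN_disjoint) (use assms(1) in auto)
  also have "\<dots> \<le> card (f ` P) * card {x\<in>P. f x = v}"
    using sum_bounded_above[of "f ` P" "\<lambda>w. card {x\<in>P. f x = w}" "card {x\<in>P. f x = v}"] v
    by auto
  also have "\<dots> \<le> q * card {x\<in>P. f x = v}"
    using card_mono[OF assms(3,2)] assms(4) by simp
  finally show ?thesis by blast
qed simp

lemma power_choose_le_power_power:
  fixes b c :: nat
  assumes "1 \<le> c" "b \<le> c" "n \<le> L"
  shows "b ^ (n choose j) \<le> c ^ (L ^ j)"
proof -
  have "n choose j \<le> n ^ j"
    by (cases "j \<le> n") (auto simp: binomial_le_pow binomial_eq_0)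
  also have "\<dots> \<le> L ^ j" using assms(3) by (rule power_mono) simp
  finally have "c ^ (n choose j) \<le> c ^ (L ^ j)" using assms(1) by (rule power_increasing)
  moreover have "b ^ (n choose j) \<le> c ^ (n choose j)" using assms(2) by (rule power_mono) simp
  ultimately show ?thesis by linarith
qed

definition end_homogeneous :: "('a::linorder set \<Rightarrow> 'c) \<Rightarrow> nat \<Rightarrow> 'a set \<Rightarrow> 'a set \<Rightarrow> bool" where
  "end_homogeneous f k A P \<longleftrightarrow> (\<forall>Z \<in> nsets A k. \<forall>x \<in> A \<union> P. \<forall>x' \<in> A \<union> P.
      Max Z < x \<longrightarrow> Max Z < x' \<longrightarrow> f (insert x Z) = f (insert x' Z))"

lemma end_homogeneous_insert:
  fixes f :: "'a::linorder set \<Rightarrow> 'c"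
  assumes "end_homogeneous f k A P" "a \<in> P" "\<forall>y\<in>A. y < a" "P' \<subseteq> P - {a}"
    and "\<And>x x' Z. x \<in> P' \<Longrightarrow> x' \<in> P' \<Longrightarrow> Z \<in> nsets A (k - 1) \<Longrightarrow>
      f (insert x (insert a Z)) = f (insert x' (insert a Z))"
  shows "end_homogeneous f k (insert a A) P'"
  unfolding end_homogeneous_def
proof (intro ballI impI)
  fix Z x x'
  assume Z: "Z \<in> nsets (insert a A) k" and x: "x \<in> insert a A \<union> P'" and x': "x' \<in> insert a A \<union> P'"
    and mx: "Max Z < x" and mx': "Max Z < x'"
  have fZ: "finite Z" and ZA: "Z \<subseteq> insert a A" using Z by (auto simp: nsets_def)
  show "f (insert x Z) = f (insert x' Z)"
  proof (cases "a \<in> Z")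
    case True
    have "y \<notin> insert a A" if "Max Z < y" for y
    proof -
      have "a < y" using Max_ge[OF fZ True] that by (rule le_less_trans)
      then show ?thesis using assms(3) by (metis insert_iff order.asym)
    qed
    then have "x \<in> P'" "x' \<in> P'" using x x' mx mx' by auto
    moreover have "Z - {a} \<in> nsets A (k - 1)" using Z True ZA fZ by (auto simp: nsets_def)
    ultimately have "f (insert x (insert a (Z - {a}))) = f (insert x' (insert a (Z - {a})))"
      by (rule assms(5))
    then show ?thesis using True by (simp add: insert_absorb)
  next
    case False
    then have "Z \<in> nsets A k" using Z by (auto simp: nsets_def)
    moreover have "x \<in> A \<union> P" "x' \<in> A \<union> P" using x x' assms(2,4) by auto
    ultimately show ?thesis using mx mx'
      by (rule assms(1)[unfolded end_homogeneous_def, rule_format])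
  qed
qed

lemma end_homogeneous_insert_Min:
  fixes f :: "'a::linorder set \<Rightarrow> 'c"
  assumes "finite A" "finite P" "end_homogeneous f k A P" "\<forall>a\<in>A. \<forall>p\<in>P. a < p" "finite (range f)"
    and q: "card (range f) ^ (card A choose (k - 1)) \<le> q" and P: "(q + 1) ^ Suc s \<le> card P"
  shows "\<exists>P' \<subseteq> P - {Min P}. (q + 1) ^ s \<le> card P' \<and> end_homogeneous f k (insert (Min P) A) P'"
proof -
  have "0 < (q + 1) ^ Suc s" by simp
  then have "P \<noteq> {}" using P by auto
  define a where "a = Min P"
  have aP: "a \<in> P" unfolding a_def using assms(2) \<open>P \<noteq> {}\<close> by simp
  define induced where "induced x = restrict (\<lambda>Z. f (insert x (insert a Z))) (nsets A (k - 1))" for x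
  define K where "K = PiE (nsets A (k - 1)) (\<lambda>_. range f)"
  have "induced ` (P - {a}) \<subseteq> K" unfolding induced_def K_def by auto
  moreover have "finite K" unfolding K_def using assms(1,5)
    by (simp add: finite_PiE finite_imp_finite_nsets)
  moreover have "card K \<le> q" unfolding K_def using assms(1) q
    by (simp add: card_PiE finite_imp_finite_nsets)
  ultimately have "\<exists>v. card (P - {a}) \<le> q * card {x \<in> P - {a}. induced x = v}"
    using assms(2) by (intro exists_large_fiber) auto
  then obtain v where v: "card (P - {a}) \<le> q * card {x \<in> P - {a}. induced x = v}" by blast
  define P' where "P' = {x \<in> P - {a}. induced x = v}"
  have "end_homogeneous f k (insert a A) P'"
  proof (rule end_homogeneous_insert[OF assms(3) aP])
    show "\<forall>y\<in>A. y < a" using assms(4) aP by blast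
    show "P' \<subseteq> P - {a}" unfolding P'_def by blast
    fix x x' Z assume "x \<in> P'" "x' \<in> P'" "Z \<in> nsets A (k - 1)"
    moreover from \<open>x \<in> P'\<close> \<open>x' \<in> P'\<close> have "induced x Z = induced x' Z" unfolding P'_def by simp
    ultimately show "f (insert x (insert a Z)) = f (insert x' (insert a Z))" unfolding induced_def
      by simp
  qed
  moreover have "(q + 1) ^ s \<le> card P'"
  proof -
    have "0 < card (range f)" using assms(5) by (simp add: card_gt_0_iff)
    then have "1 \<le> card (range f) ^ (card A choose (k - 1))" by simp
    then have "1 \<le> q" using q by linarith
    have "(q + 1) ^ Suc s = q * (q + 1) ^ s + (q + 1) ^ s" by simp
    moreover have "1 \<le> (q + 1) ^ s" by simp
    moreover have "card P - 1 \<le> q * card P'" using v aP assms(2) unfolding P'_def by simp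
    ultimately have "q * (q + 1) ^ s \<le> q * card P'" using P by linarith
    then show ?thesis using \<open>1 \<le> q\<close> by simp
  qed
  moreover have "P' \<subseteq> P - {Min P}" unfolding P'_def a_def by blast
  ultimately show ?thesis unfolding a_def by blast
qed

lemma end_homogeneous_extend:
  fixes f :: "'a::linorder set \<Rightarrow> 'c"
  assumes "finite (range f)" "card (range f) \<le> c"
  shows "finite A \<Longrightarrow> finite P \<Longrightarrow> end_homogeneous f k A P \<Longrightarrow> \<forall>a\<in>A. \<forall>p\<in>P. a < p
    \<Longrightarrow> card A + s \<le> L \<Longrightarrow> (c ^ (L ^ (k - 1)) + 1) ^ s \<le> card P
    \<Longrightarrow> \<exists>E. A \<subseteq> E \<and> E \<subseteq> A \<union> P \<and> card E = card A + s \<and> end_homogeneous f k E {}"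
proof (induction s arbitrary: A P)
  case 0
  then show ?case by (intro exI[of _ A]) (auto simp: end_homogeneous_def)
next
  case (Suc s)
  have "0 < card (range f)" using assms(1) by (simp add: card_gt_0_iff)
  then have "card (range f) ^ (card A choose (k - 1)) \<le> c ^ (L ^ (k - 1))"
    using assms(2) Suc.prems(5) by (intro power_choose_le_power_power) auto
  then obtain P' where P': "P' \<subseteq> P - {Min P}" "(c ^ (L ^ (k - 1)) + 1) ^ s \<le> card P'"
    "end_homogeneous f k (insert (Min P) A) P'"
    using end_homogeneous_insert_Min[OF Suc.prems(1-4) assms(1) _ Suc.prems(6)] by blast
  have "0 < (c ^ (L ^ (k - 1)) + 1) ^ Suc s" by simp
  then have "P \<noteq> {}" using Suc.prems(6) by auto
  then have MinP: "Min P \<in> P" using Suc.prems(2) by simp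
  then have MinA: "Min P \<notin> A" using Suc.prems(4) by blast
  have "\<forall>a\<in>insert (Min P) A. \<forall>p\<in>P'. a < p"
  proof (intro ballI)
    fix a p assume a: "a \<in> insert (Min P) A" and "p \<in> P'"
    then have p: "p \<in> P" "p \<noteq> Min P" using P'(1) by auto
    then have "Min P < p" using Suc.prems(2) by (simp add: order.not_eq_order_implies_strict)
    then show "a < p" using a p(1) Suc.prems(4) by auto
  qed
  moreover have "card (insert (Min P) A) + s \<le> L" using Suc.prems(1,5) MinA by simp
  moreover have "finite (insert (Min P) A)" "finite P'" using Suc.prems(1,2) P'(1) finite_subset
    by auto
  ultimately obtain E where E: "insert (Min P) A \<subseteq> E" "E \<subseteq> insert (Min P) A \<union> P'"
    "card E = card (insert (Min P) A) + s" "end_homogeneous f k E {}"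
    using Suc.IH[of "insert (Min P) A" P'] P'(2,3) by blast
  show ?case
  proof (intro exI[of _ E] conjI)
    show "A \<subseteq> E" using E(1) by blast
    show "E \<subseteq> A \<union> P" using E(2) P'(1) MinP by blast
    show "card E = card A + Suc s" using E(3) Suc.prems(1) MinA by simp
  qed (rule E(4))
qed

lemma exists_end_homogeneous:
  fixes f :: "'a::linorder set \<Rightarrow> 'c"
  assumes "finite (range f)" "card (range f) \<le> c"
    "1 \<le> k" "finite X" "(c ^ (L ^ (k - 1)) + 1) ^ L \<le> card X"
  shows "\<exists>E \<subseteq> X. card E = L \<and> end_homogeneous f k E {}"
proof -
  have "end_homogeneous f k {} X" unfolding end_homogeneous_def using assms(3)
    by (auto simp: nsets_def)
  then show ?thesis using end_homogeneous_extend[OF assms(1,2), of "{}" X k L L] assms(4,5) by auto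
qed

lemma Diff_Max_in_nsets:
  assumes "Y \<in> nsets H (Suc k)"
  shows "Y - {Max Y} \<in> nsets H k"
proof -
  have "finite Y" "Y \<noteq> {}" using assms by (auto simp: nsets_def)
  then show ?thesis using assms by (auto simp: nsets_def)
qed

lemma end_homogeneous_colour:
  fixes f :: "'a::linorder set \<Rightarrow> 'c"
  assumes "end_homogeneous f k E {}" "finite E" "Y \<in> nsets (E - {Max E}) (Suc k)" "1 \<le> k"
  shows "f Y = f (insert (Max E) (Y - {Max Y}))"
proof -
  define Z where "Z = Y - {Max Y}"
  have fY: "finite Y" and YE: "Y \<subseteq> E - {Max E}" and "Y \<noteq> {}"
    using assms(3,4) by (auto simp: nsets_def)
  then have yY: "Max Y \<in> Y" by simp
  have Z: "Z \<in> nsets E k" unfolding Z_def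
    using Diff_Max_in_nsets[OF assms(3)] nsets_mono[of "E - {Max E}" E] by blast
  then have "Z \<noteq> {}" "finite Z" using assms(4) by (auto simp: nsets_def)
  then have "Max Z \<in> Y - {Max Y}" unfolding Z_def by (metis Max_in Z_def)
  then have "Max Z < Max Y" using fY by (simp add: order.not_eq_order_implies_strict)
  moreover have "Max Y < Max E"
    using yY YE assms(2) by (simp add: order.not_eq_order_implies_strict subset_iff)
  moreover have "Max Y \<in> E" using yY YE by auto
  moreover have "Max E \<in> E" using \<open>Max Y \<in> E\<close> assms(2) by (intro Max_in) auto
  ultimately have "f (insert (Max Y) Z) = f (insert (Max E) Z)"
    using Z assms(1) unfolding end_homogeneous_def by (meson UnI1 order.strict_trans)
  moreover have "insert (Max Y) Z = Y" unfolding Z_def using yY by auto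
  ultimately show ?thesis unfolding Z_def by simp
qed

(* The equation for k = 0 is a dummy: the theorem below needs k \<ge> 1. *)
fun ramsey_bound :: "nat \<Rightarrow> nat \<Rightarrow> nat \<Rightarrow> nat" where
  "ramsey_bound c 0 m = m"
| "ramsey_bound c (Suc 0) m = c * m"
| "ramsey_bound c (Suc (Suc k)) m =
     (c ^ ((ramsey_bound c (Suc k) m + 1) ^ k) + 1) ^ (ramsey_bound c (Suc k) m + 1)"

theorem ramsey_explicit:
  fixes f :: "'a::linorder set \<Rightarrow> 'c"
  assumes "finite (range f)" "card (range f) \<le> c" "1 \<le> k" "finite X" "ramsey_bound c k m \<le> card X"
  shows "\<exists>H \<subseteq> X. card H = m \<and> (\<forall>Y\<in>nsets H k. \<forall>Y'\<in>nsets H k. f Y = f Y')"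
  using assms(3,1,2,4,5)
proof (induction k arbitrary: f X rule: nat_induct_at_least)
  case base
  obtain v where "card X \<le> c * card {x\<in>X. f {x} = v}"
    using exists_large_fiber[of X "\<lambda>x. f {x}" "range f" c] base.prems by auto
  moreover have "0 < card (range f)" using base.prems(1) by (simp add: card_gt_0_iff)
  then have "1 \<le> c" using base.prems(2) by linarith
  moreover have "c * m \<le> card X" using base.prems(4) by simp
  ultimately have "c * m \<le> c * card {x\<in>X. f {x} = v}" by linarith
  then have "m \<le> card {x\<in>X. f {x} = v}" using \<open>1 \<le> c\<close> by simp
  then obtain H where H: "H \<subseteq> {x\<in>X. f {x} = v}" "card H = m" by (meson obtain_subset_with_card_n)
  then show ?case by (intro exI[of _ H]) (auto simp: nsets_one)
next
  case (Suc k)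
  define L where "L = ramsey_bound c k m + 1"
  have "ramsey_bound c (Suc k) m = (c ^ (L ^ (k - 1)) + 1) ^ L"
    using Suc.hyps unfolding L_def by (cases k) auto
  then obtain E where E: "E \<subseteq> X" "card E = L" "end_homogeneous f k E {}"
    using exists_end_homogeneous[OF Suc.prems(1,2) Suc.hyps Suc.prems(3)] Suc.prems(4) by auto
  have fE: "finite E" using E(1) Suc.prems(3) finite_subset by blast
  define g where "g = (\<lambda>Z. f (insert (Max E) Z))"
  have "range g \<subseteq> range f" unfolding g_def by auto
  have fg: "finite (range g)" using finite_subset[OF \<open>range g \<subseteq> range f\<close> Suc.prems(1)] .
  have cg: "card (range g) \<le> c"
    using card_mono[OF Suc.prems(1) \<open>range g \<subseteq> range f\<close>] Suc.prems(2) by linarith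
  have "E \<noteq> {}" using E(2) L_def by auto
  then have "card (E - {Max E}) = ramsey_bound c k m" using E(2) fE L_def by simp
  then have "\<exists>H \<subseteq> E - {Max E}. card H = m \<and> (\<forall>Y\<in>nsets H k. \<forall>Y'\<in>nsets H k. g Y = g Y')"
    using fE by (intro Suc.IH[OF fg cg]) auto
  then obtain H where H: "H \<subseteq> E - {Max E}" "card H = m" "\<forall>Y\<in>nsets H k. \<forall>Y'\<in>nsets H k. g Y = g Y'"
    by blast
  have f_eq_g: "f Y = g (Y - {Max Y})" if "Y \<in> nsets H (Suc k)" for Y
    unfolding g_def
    by (rule end_homogeneous_colour[OF E(3) fE subsetD[OF nsets_mono[OF H(1)] that] Suc.hyps])
  show ?case
  proof (intro exI[of _ H] conjI ballI)
    show "H \<subseteq> X" using H(1) E(1) by blast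
    show "card H = m" by (rule H(2))
    fix Y Y' assume "Y \<in> nsets H (Suc k)" "Y' \<in> nsets H (Suc k)"
    then show "f Y = f Y'"
      using H(3) Diff_Max_in_nsets f_eq_g by metis
  qed
qed

fun tower :: "nat \<Rightarrow> nat \<Rightarrow> nat" where
  "tower 0 x = x"
| "tower (Suc k) x = 2 ^ tower k x"

lemma tower_mono: "x \<le> y \<Longrightarrow> tower k x \<le> tower k y"
  by (induction k) auto

lemma le_tower: "x \<le> tower k x"
proof (induction k)
  case (Suc k)
  moreover have "tower k x < tower (Suc k) x" using less_exp by simp
  ultimately show ?case by linarith
qed simp

lemma tw_Suc_of_nat: "tw (Suc k) (real x) = real (tower k x)"
  by (induction k) (simp_all add: powr_realpow)

lemma tw_mono: "x \<le> y \<Longrightarrow> tw k x \<le> tw k y"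
proof (induction k)
  case (Suc k)
  then show ?case by (cases k) (auto intro: powr_mono)
qed simp

lemma tower_le_of_tw_le: "tw (Suc k) x \<le> real N \<Longrightarrow> real y \<le> x \<Longrightarrow> tower k y \<le> N"
  using tw_mono[of "real y" x "Suc k"] tw_Suc_of_nat[of k y] by simp

lemma mult_le_power: "1 \<le> a \<Longrightarrow> 2 \<le> (z::nat) \<Longrightarrow> a * z \<le> z ^ a"
proof (induction a rule: nat_induct_at_least)
  case (Suc a)
  have "Suc a * z = a * z + z" by simp
  also have "\<dots> \<le> z ^ a + z ^ a" using Suc self_le_power[of z a] by simp
  also have "\<dots> \<le> z * z ^ a" using Suc by (simp add: mult_2[symmetric] mult_right_mono)
  finally show ?case by simp
qed simp

lemma mult_tower_le: "1 \<le> x \<Longrightarrow> 1 \<le> a \<Longrightarrow> a * tower k x \<le> tower k (a * x)"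
proof (induction k)
  case (Suc k)
  have "2 \<le> (2::nat) ^ tower k x"
    using le_tower[of x k] Suc.prems
      by (metis power_one_right power_increasing le_trans one_le_numeral)
  then have "a * 2 ^ tower k x \<le> 2 ^ (a * tower k x)"
    using mult_le_power[of a "2 ^ tower k x"] Suc.prems
      by (simp add: power_mult[symmetric] mult.commute)
  also have "\<dots> \<le> 2 ^ tower k (a * x)" using Suc by (intro power_increasing) auto
  finally show ?case by simp
qed simp

lemma ramsey_bound_step_le:
  assumes "1 \<le> (c::nat)" "1 \<le> L"
  shows "(c ^ (L ^ k) + 1) ^ L \<le> 2 ^ (2 * c * L ^ Suc k)"
proof -
  have "c ^ (L ^ k) + 1 \<le> (2 * c) ^ (L ^ k)"
  proof -
    have "c ^ (L ^ k) + 1 \<le> 2 * c ^ (L ^ k)" using assms(1) by simp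
    also have "\<dots> \<le> 2 ^ (L ^ k) * c ^ (L ^ k)"
      using assms(2) by (intro mult_right_mono) (simp_all add: self_le_power)
    finally show ?thesis by (simp add: power_mult_distrib)
  qed
  also have "\<dots> \<le> (2 ^ (2 * c)) ^ (L ^ k)" using less_exp[of "2 * c"] by (intro power_mono) auto
  finally have "(c ^ (L ^ k) + 1) ^ L \<le> ((2 ^ (2 * c)) ^ (L ^ k)) ^ L" by (rule power_mono) simp
  also have "\<dots> = 2 ^ (2 * c * L ^ Suc k)"
    by (simp only: power_mult[symmetric] power_Suc mult.commute mult.left_commute)
  finally show ?thesis .
qed

lemma mult_power_le_exp:
  assumes "1 \<le> z" "L \<le> 2 ^ z + 1"
  shows "e * L ^ Suc k \<le> 2 ^ ((e + 2 * k + 2) * z)"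
proof -
  have "(1::nat) \<le> 2 ^ z" "(2::nat) ^ (z + 1) = 2 * 2 ^ z" by simp_all
  then have "L \<le> 2 ^ (z + 1)" using assms(2) by linarith
  then have "L ^ Suc k \<le> (2 ^ (z + 1)) ^ Suc k" by (rule power_mono) simp
  also have "\<dots> = 2 ^ ((z + 1) * Suc k)" by (rule power_mult[symmetric])
  finally have "L ^ Suc k \<le> 2 ^ ((z + 1) * Suc k)" .
  then have "e * L ^ Suc k \<le> 2 ^ e * 2 ^ ((z + 1) * Suc k)"
    using less_exp[of e] by (intro mult_mono) auto
  also have "\<dots> = 2 ^ (e + (z + 1) * Suc k)" by (simp only: power_add)
  also have "\<dots> \<le> 2 ^ ((e + 2 * k + 2) * z)"
  proof (rule power_increasing)
    obtain z' where "z = Suc z'" using assms(1) by (cases z) auto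
    then have "e \<le> e * z" "Suc k \<le> z * Suc k" by simp_all
    moreover have "e + (z + 1) * Suc k = e + z * Suc k + Suc k"
      "(e + 2 * k + 2) * z = e * z + z * Suc k + z * Suc k" by (simp_all add: algebra_simps)
    ultimately show "e + (z + 1) * Suc k \<le> (e + 2 * k + 2) * z" by linarith
  qed simp
  finally show ?thesis .
qed

lemma mult_power_le_tower:
  assumes "1 \<le> y" "L \<le> tower k y + 1"
  shows "e * L ^ Suc k \<le> tower k ((e + 2 * k + 2) * (y + 1))"
proof (cases k)
  case 0
  then have "L \<le> y + 1" using assms(2) by simp
  then have "e * L \<le> e * (y + 1)" by (rule mult_le_mono2)
  also have "\<dots> \<le> (e + 2) * (y + 1)" by simp
  finally show ?thesis using 0 by simp
next
  case (Suc j)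
  have "e * L ^ Suc k \<le> 2 ^ ((e + 2 * k + 2) * tower j y)"
    using assms Suc le_tower[of y j] by (intro mult_power_le_exp) auto
  also have "\<dots> \<le> 2 ^ tower j ((e + 2 * k + 2) * (y + 1))"
  proof (rule power_increasing)
    have "(e + 2 * k + 2) * tower j y \<le> tower j ((e + 2 * k + 2) * y)"
      using assms(1) by (intro mult_tower_le) auto
    also have "\<dots> \<le> tower j ((e + 2 * k + 2) * (y + 1))" by (intro tower_mono) simp
    finally show "(e + 2 * k + 2) * tower j y \<le> tower j ((e + 2 * k + 2) * (y + 1))" .
  qed simp
  finally show ?thesis using Suc by simp
qed

lemma ramsey_bound_le_tower:
  assumes "1 \<le> c"
  shows "\<exists>B\<ge>1. \<forall>m\<ge>1. ramsey_bound c (Suc k) m \<le> tower k (B * m)"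
proof (induction k)
  case 0
  show ?case using assms by (intro exI[of _ c]) auto
next
  case (Suc k)
  obtain B where B: "1 \<le> B" "\<forall>m\<ge>1. ramsey_bound c (Suc k) m \<le> tower k (B * m)"
    using Suc.IH by blast
  define B' where "B' = (2 * c + 2 * k + 2) * (B + 1)"
  have "ramsey_bound c (Suc (Suc k)) m \<le> tower (Suc k) (B' * m)" if "1 \<le> m" for m
  proof -
    define L where "L = ramsey_bound c (Suc k) m + 1"
    have "L \<le> tower k (B * m) + 1" unfolding L_def using B that by simp
    then have "2 * c * L ^ Suc k \<le> tower k ((2 * c + 2 * k + 2) * (B * m + 1))"
      using B(1) that by (intro mult_power_le_tower) auto
    also have "\<dots> \<le> tower k (B' * m)"
    proof (rule tower_mono)
      have "(2 * c + 2 * k + 2) * (B * m + 1) \<le> (2 * c + 2 * k + 2) * ((B + 1) * m)"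
        by (rule mult_le_mono2) (use that in simp)
      then show "(2 * c + 2 * k + 2) * (B * m + 1) \<le> B' * m"
        unfolding B'_def by (simp only: mult.assoc)
    qed
    finally have "2 ^ (2 * c * L ^ Suc k) \<le> tower (Suc k) (B' * m)"
      unfolding tower.simps by (rule power_increasing) simp
    moreover have "ramsey_bound c (Suc (Suc k)) m \<le> 2 ^ (2 * c * L ^ Suc k)"
      unfolding L_def ramsey_bound.simps(3) by (rule ramsey_bound_step_le[OF assms]) simp
    ultimately show ?thesis by (rule order_trans[rotated])
  qed
  moreover have "1 \<le> B'" unfolding B'_def by simp
  ultimately show ?case by blast
qed

lemma exp_separated_zero: "(\<And>x. x \<in> B \<Longrightarrow> F x = 0) \<Longrightarrow> exp_separated B F"
  unfolding exp_separated_def by auto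

lemma exp_separated_uminus: "exp_separated B F \<Longrightarrow> exp_separated B (\<lambda>x. - F x)"
  unfolding exp_separated_def by auto

lemma exp_separated_if_comparable:
  fixes F c :: "'b \<Rightarrow> real"
  assumes "s = 1 \<or> s = -1"
    and "\<forall>P\<in>B. c P \<le> s * F P \<and> s * F P \<le> 2 * c P"
    and "\<forall>P\<in>B. \<forall>Q\<in>B. P \<noteq> Q \<longrightarrow> 4 * c Q \<le> c P \<or> 4 * c P \<le> c Q"
  shows "exp_separated B F"
proof -
  have "0 \<le> s * F P" and abs: "\<bar>F P\<bar> = s * F P" if "P \<in> B" for P
    using assms(1,2) that by (auto simp: abs_if)
  then have "(\<forall>P\<in>B. 0 \<le> F P) \<or> (\<forall>P\<in>B. F P \<le> 0)"
    using assms(1) by (auto simp: zero_le_mult_iff)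
  moreover have "2 * \<bar>F Q\<bar> \<le> \<bar>F P\<bar> \<or> 2 * \<bar>F P\<bar> \<le> \<bar>F Q\<bar>" if "P \<in> B" "Q \<in> B" "P \<noteq> Q" for P Q
    using assms(2,3) abs that by (smt (verit))
  ultimately show ?thesis unfolding exp_separated_def by blast
qed

lemma exp_separated_image:
  assumes "exp_separated A (G \<circ> k)"
  shows "exp_separated (k ` A) G"
  unfolding exp_separated_def
proof (intro conjI ballI impI)
  show "(\<forall>b\<in>k ` A. 0 \<le> G b) \<or> (\<forall>b\<in>k ` A. G b \<le> 0)"
    using assms unfolding exp_separated_def by auto
  fix b b' assume "b \<in> k ` A" "b' \<in> k ` A" "b \<noteq> b'"
  then obtain a a' where "a \<in> A" "a' \<in> A" "b = k a" "b' = k a'" "a \<noteq> a'" by blast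
  then show "2 * \<bar>G b'\<bar> \<le> \<bar>G b\<bar> \<or> 2 * \<bar>G b\<bar> \<le> \<bar>G b'\<bar>"
    using assms unfolding exp_separated_def by auto
qed

lemma pairs2_image:
  assumes "strict_mono_on I h"
  shows "pairs2 (h ` I) = map_prod h h ` pairs2 I"
proof
  show "map_prod h h ` pairs2 I \<subseteq> pairs2 (h ` I)"
    using assms by (auto simp: pairs2_def dest: strict_mono_onD)
  show "pairs2 (h ` I) \<subseteq> map_prod h h ` pairs2 I"
  proof
    fix p assume "p \<in> pairs2 (h ` I)"
    then obtain i j where p: "p = (h i, h j)" "i \<in> I" "j \<in> I" "h i < h j" by (auto simp: pairs2_def)
    have "i < j"
    proof (rule ccontr)
      assume "\<not> i < j"
      then have "j < i \<or> j = i" by auto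
      then show False using p strict_mono_onD[OF assms p(3) p(2)] by auto
    qed
    then have "(i, j) \<in> pairs2 I" using p by (simp add: pairs2_def)
    then show "p \<in> map_prod h h ` pairs2 I" using p(1)
      by (intro image_eqI[of _ _ "(i, j)"]) simp_all
  qed
qed

lemma equiv_exp_separated_image:
  fixes h :: "'a::linorder \<Rightarrow> 'b::linorder"
  assumes "strict_mono_on I h" "exp_separated (pairs2 I) (\<lambda>(i, j). \<phi> (h i, h j) - \<rho>1 i - \<rho>2 j)"
  shows "\<exists>\<sigma>. equiv_on (h ` I) \<sigma> \<phi> \<and> exp_separated (pairs2 (h ` I)) \<sigma>"
proof -
  define g where "g = inv_into I h"
  define \<sigma> where "\<sigma> = (\<lambda>(x, y). \<phi> (x, y) - \<rho>1 (g x) - \<rho>2 (g y))"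
  have "equiv_on (h ` I) \<sigma> \<phi>"
    unfolding equiv_on_def \<sigma>_def by (intro exI[of _ "\<rho>1 \<circ> g"] exI[of _ "\<rho>2 \<circ> g"]) auto
  moreover have "g (h i) = i" if "i \<in> I" for i
    unfolding g_def using strict_mono_on_imp_inj_on[OF assms(1)] that by (rule inv_into_f_f)
  then have "\<forall>p\<in>pairs2 I. (\<sigma> \<circ> map_prod h h) p = (\<lambda>(i, j). \<phi> (h i, h j) - \<rho>1 i - \<rho>2 j) p"
    unfolding \<sigma>_def pairs2_def by auto
  then have "exp_separated (pairs2 I) (\<sigma> \<circ> map_prod h h)"
    using assms(2) unfolding exp_separated_def by simp
  then have "exp_separated (pairs2 (h ` I)) \<sigma>"
    unfolding pairs2_image[OF assms(1)] by (rule exp_separated_image)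
  ultimately show ?thesis by blast
qed

section \<open>Rectangle differences and order invariance\<close>

definition rect_diff :: "(nat \<times> nat \<Rightarrow> real) \<Rightarrow> nat \<Rightarrow> nat \<Rightarrow> nat \<Rightarrow> nat \<Rightarrow> real" where
  "rect_diff \<psi> i j k l = \<psi> (i, k) - \<psi> (i, l) - \<psi> (j, k) + \<psi> (j, l)"

lemma rect_diff_split_rows: "rect_diff \<psi> i j k l = rect_diff \<psi> i h k l + rect_diff \<psi> h j k l"
  by (simp add: rect_diff_def)

lemma rect_diff_split_cols: "rect_diff \<psi> i j k l = rect_diff \<psi> i j k h + rect_diff \<psi> i j h l"
  by (simp add: rect_diff_def)

lemma rect_diff_uminus: "rect_diff (\<lambda>p. - \<psi> p) i j k l = - rect_diff \<psi> i j k l"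
  by (simp add: rect_diff_def)

type_synonym comparison = "(nat \<times> nat \<times> nat \<times> nat) \<times> (nat \<times> nat \<times> nat \<times> nat) \<times> real \<times> real"

(* The coefficients 0, 1 and 4 express signs, plain comparisons and fourfold growth. *)
definition comparisons :: "nat \<Rightarrow> comparison set" where
  "comparisons n = ({..<n} \<times> {..<n} \<times> {..<n} \<times> {..<n}) \<times> ({..<n} \<times> {..<n} \<times> {..<n} \<times> {..<n}) \<times>
     {0, 1, 4} \<times> {0, 1, 4}"

fun comparison_holds :: "(nat \<times> nat \<Rightarrow> real) \<Rightarrow> nat list \<Rightarrow> comparison \<Rightarrow> bool" where
  "comparison_holds \<psi> xs ((i1, i2, i3, i4), (j1, j2, j3, j4), r, s) \<longleftrightarrow>
     s * rect_diff \<psi> (xs ! j1) (xs ! j2) (xs ! j3) (xs ! j4)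
       \<le> r * rect_diff \<psi> (xs ! i1) (xs ! i2) (xs ! i3) (xs ! i4)"

(* Eight points span two rectangles. *)
definition order_invariant :: "(nat \<times> nat \<Rightarrow> real) \<Rightarrow> nat \<Rightarrow> bool" where
  "order_invariant \<psi> M \<longleftrightarrow> (\<forall>xs ys. sorted_wrt (<) xs \<longrightarrow> sorted_wrt (<) ys \<longrightarrow>
     length xs = length ys \<longrightarrow> length xs \<le> 8 \<longrightarrow> set xs \<subseteq> {..<M} \<longrightarrow> set ys \<subseteq> {..<M} \<longrightarrow>
     (\<forall>t\<in>comparisons (length xs). comparison_holds \<psi> xs t = comparison_holds \<psi> ys t))"

definition comparison_type :: "(nat \<times> nat \<Rightarrow> real) \<Rightarrow> nat set \<Rightarrow> comparison set" where
  "comparison_type \<phi> Q = {t \<in> comparisons 8. comparison_holds \<phi> (sorted_list_of_set Q) t}"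

lemma finite_comparisons: "finite (comparisons n)"
  by (simp add: comparisons_def)

lemma comparisons_mono: "m \<le> n \<Longrightarrow> comparisons m \<subseteq> comparisons n"
  by (auto simp: comparisons_def)

lemma comparison_holds_append:
  "t \<in> comparisons (length xs) \<Longrightarrow> comparison_holds \<psi> (xs @ ys) t = comparison_holds \<psi> xs t"
  by (cases t) (auto simp: comparisons_def nth_append)

lemma comparison_holds_map:
  "t \<in> comparisons (length xs) \<Longrightarrow>
     comparison_holds (\<lambda>(i, j). \<phi> (h i, h j)) xs t = comparison_holds \<phi> (map h xs) t"
  by (cases t) (auto simp: comparisons_def rect_diff_def)

lemma order_invariantD:
  assumes "order_invariant \<psi> M" "sorted_wrt (<) xs" "sorted_wrt (<) ys" "length xs = length ys"
    "length xs \<le> 8" "set xs \<subseteq> {..<M}" "set ys \<subseteq> {..<M}" "t \<in> comparisons (length xs)"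
  shows "comparison_holds \<psi> xs t = comparison_holds \<psi> ys t"
  using assms unfolding order_invariant_def by blast

lemma sorted_wrt_map_strict_mono:
  assumes "strict_mono_on A h" "sorted_wrt (<) xs" "set xs \<subseteq> A"
  shows "sorted_wrt (<) (map h xs)"
proof -
  have "sorted_wrt (\<lambda>x y. h x < h y) xs"
    by (rule sorted_wrt_mono_rel[OF _ assms(2)]) (use assms(1,3) in \<open>auto dest: strict_mono_onD\<close>)
  then show ?thesis by (simp add: sorted_wrt_map)
qed

lemma sorted_list_of_set_image:
  assumes "strict_mono_on A h" "sorted_wrt (<) xs" "set xs \<subseteq> A"
  shows "sorted_list_of_set (h ` set xs) = map h xs"
  using sorted_wrt_map_strict_mono[OF assms]
  by (metis list.set_map sorted_list_of_set.idem_if_sorted_distinct strict_sorted_iff)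

lemma strict_mono_on_nth_sorted_list_of_set:
  assumes "finite H"
  shows "strict_mono_on {..<card H} ((!) (sorted_list_of_set H))"
    and "(!) (sorted_list_of_set H) ` {..<card H} = H"
proof -
  show "strict_mono_on {..<card H} ((!) (sorted_list_of_set H))"
    using assms by (intro strict_mono_onI) (auto intro: sorted_wrt_nth_less)
  have "(!) (sorted_list_of_set H) ` {..<card H} = set (sorted_list_of_set H)"
    using assms by (auto simp: set_conv_nth)
  then show "(!) (sorted_list_of_set H) ` {..<card H} = H" using assms by simp
qed

lemma image_nth_sorted_list_of_set_in_nsets:
  assumes "finite H" "sorted_wrt (<) zs" "set zs \<subseteq> {..<card H}"
  shows "(!) (sorted_list_of_set H) ` set zs \<in> nsets H (length zs)"
proof -
  note h = strict_mono_on_nth_sorted_list_of_set[OF assms(1)]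
  have "inj_on ((!) (sorted_list_of_set H)) (set zs)"
    using strict_mono_on_imp_inj_on[OF h(1)] assms(3) by (rule inj_on_subset)
  then have "card ((!) (sorted_list_of_set H) ` set zs) = length zs"
    using assms(2) by (simp add: card_image distinct_card strict_sorted_iff)
  moreover have "(!) (sorted_list_of_set H) ` set zs \<subseteq> H" using h(2) assms(3) by blast
  ultimately show ?thesis by (simp add: nsets_def finite_subset)
qed

lemma comparison_holds_nth_sorted_list_of_set:
  fixes \<phi> :: "nat \<times> nat \<Rightarrow> real"
  assumes "finite H" "sorted_wrt (<) zs" "set zs \<subseteq> {..<card H}" "t \<in> comparisons (length zs)"
  defines "h \<equiv> (!) (sorted_list_of_set H)"
  shows "comparison_holds (\<lambda>(i, j). \<phi> (h i, h j)) zs t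
    = comparison_holds \<phi> (sorted_list_of_set (h ` set zs)) t"
proof -
  have "sorted_list_of_set (h ` set zs) = map h zs"
    unfolding h_def using strict_mono_on_nth_sorted_list_of_set(1)[OF assms(1)] assms(2,3)
    by (rule sorted_list_of_set_image)
  then show ?thesis using comparison_holds_map[OF assms(4)] by simp
qed

lemma order_invariant_if_homogeneous:
  fixes \<phi> :: "nat \<times> nat \<Rightarrow> real"
  assumes "finite H" "card H = m" "8 \<le> m"
    and hom: "\<forall>Y\<in>nsets H 8. \<forall>Y'\<in>nsets H 8. comparison_type \<phi> Y = comparison_type \<phi> Y'"
  shows "order_invariant (\<lambda>(i, j). \<phi> (sorted_list_of_set H ! i, sorted_list_of_set H ! j)) (m - 8)"
proof -
  define h where "h = (!) (sorted_list_of_set H)"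
  have eight: "comparison_holds (\<lambda>(i, j). \<phi> (h i, h j)) xs t
      = comparison_holds (\<lambda>(i, j). \<phi> (h i, h j)) ys t"
    if "sorted_wrt (<) xs" "sorted_wrt (<) ys" "length xs = 8" "length ys = 8"
      "set xs \<subseteq> {..<m}" "set ys \<subseteq> {..<m}" "t \<in> comparisons 8" for xs ys t
  proof -
    have "h ` set xs \<in> nsets H 8" "h ` set ys \<in> nsets H 8"
      unfolding h_def using image_nth_sorted_list_of_set_in_nsets[OF assms(1)] that assms(2)
        by force+
    then have "comparison_type \<phi> (h ` set xs) = comparison_type \<phi> (h ` set ys)" using hom by blast
    moreover have "comparison_holds (\<lambda>(i, j). \<phi> (h i, h j)) zs t \<longleftrightarrow> t \<in> comparison_type \<phi> (h ` set zs)"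
      if "sorted_wrt (<) zs" "length zs = 8" "set zs \<subseteq> {..<m}" for zs
      unfolding h_def comparison_type_def
      using comparison_holds_nth_sorted_list_of_set[OF assms(1) that(1), of t]
            that \<open>t \<in> comparisons 8\<close> assms(2)
      by simp
    ultimately show ?thesis using that by simp
  qed
  show ?thesis
    unfolding order_invariant_def h_def[symmetric]
  proof (intro allI impI ballI)
    fix xs ys t
    assume xs: "sorted_wrt (<) xs" and ys: "sorted_wrt (<) ys"
      and len: "length xs = length ys" "length xs \<le> 8"
      and in_xs: "set xs \<subseteq> {..<m - 8}" and in_ys: "set ys \<subseteq> {..<m - 8}"
        and t: "t \<in> comparisons (length xs)"
    (* Padding with the top points is why invariance is only claimed below m - 8. *)
    define pad where "pad = [m - 8..<m - length xs]"
    have "sorted_wrt (<) (xs @ pad)" "sorted_wrt (<) (ys @ pad)"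
      using xs ys in_xs in_ys by (auto simp: pad_def sorted_wrt_append)
    moreover have "length (xs @ pad) = 8" "length (ys @ pad) = 8"
      using len assms(3) by (auto simp: pad_def)
    moreover have "set (xs @ pad) \<subseteq> {..<m}" "set (ys @ pad) \<subseteq> {..<m}"
      using in_xs in_ys by (auto simp: pad_def)
    moreover have "t \<in> comparisons 8" using t len comparisons_mono by blast
    ultimately have "comparison_holds (\<lambda>(i, j). \<phi> (h i, h j)) (xs @ pad) t
        = comparison_holds (\<lambda>(i, j). \<phi> (h i, h j)) (ys @ pad) t"
      by (intro eight)
    then show "comparison_holds (\<lambda>(i, j). \<phi> (h i, h j)) xs t
        = comparison_holds (\<lambda>(i, j). \<phi> (h i, h j)) ys t"
      using comparison_holds_append[OF t] comparison_holds_append[of t ys] t len(1) by simp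
  qed
qed

lemma comparison_holds_uminus:
  "comparison_holds (\<lambda>p. - \<psi> p) xs (i, j, r, s) = comparison_holds \<psi> xs (j, i, s, r)"
  by (cases i rule: prod_cases4; cases j rule: prod_cases4) (auto simp: rect_diff_uminus)

lemma order_invariant_uminus:
  assumes "order_invariant \<psi> M"
  shows "order_invariant (\<lambda>p. - \<psi> p) M"
  unfolding order_invariant_def
proof (intro allI impI ballI)
  fix xs ys t
  assume xs: "sorted_wrt (<) xs" "length xs \<le> 8" "set xs \<subseteq> {..<M}"
    and ys: "sorted_wrt (<) ys" "length xs = length ys" "set ys \<subseteq> {..<M}"
    and t: "t \<in> comparisons (length xs)"
  obtain i j r s where ijrs: "t = (i, j, r, s)" by (cases t rule: prod_cases4)
  have "(j, i, s, r) \<in> comparisons (length xs)" using t ijrs by (auto simp: comparisons_def)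
  then show "comparison_holds (\<lambda>p. - \<psi> p) xs t = comparison_holds (\<lambda>p. - \<psi> p) ys t"
    unfolding ijrs comparison_holds_uminus
      using order_invariantD[OF assms xs(1) ys(1,2) xs(2,3) ys(3)] by blast
qed

lemma order_invariant_image:
  assumes inv: "order_invariant \<psi> M" and us: "length us \<le> 8" "set us \<subseteq> {..<M}"
    and g: "g ` set us \<subseteq> {..<M}" "strict_mono_on (set us) g"
    and pts: "{x1, x2, x3, x4, y1, y2, y3, y4} \<subseteq> set us" and rs: "r \<in> {0, 1, 4}" "s \<in> {0, 1, 4}"
  shows "s * rect_diff \<psi> y1 y2 y3 y4 \<le> r * rect_diff \<psi> x1 x2 x3 x4 \<longleftrightarrow>
    s * rect_diff \<psi> (g y1) (g y2) (g y3) (g y4) \<le> r * rect_diff \<psi> (g x1) (g x2) (g x3) (g x4)"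
proof -
  define xs where "xs = sorted_list_of_set (set us)"
  have xs: "sorted_wrt (<) xs" "set xs = set us" "length xs \<le> 8"
    unfolding xs_def using us(1) card_length[of us] by simp_all
  have gxs: "sorted_wrt (<) (map g xs)" using g(2) xs(1) xs(2)
    by (intro sorted_wrt_map_strict_mono) auto
  define ix where "ix u = (SOME i. i < length xs \<and> xs ! i = u)" for u
  have ix: "ix u < length xs \<and> xs ! ix u = u" if "u \<in> set us" for u
    unfolding ix_def
    by (rule someI_ex[of "\<lambda>i. i < length xs \<and> xs ! i = u"])
      (use that xs(2) in_set_conv_nth[of u xs] in auto)
  have pts': "x1 \<in> set us" "x2 \<in> set us" "x3 \<in> set us" "x4 \<in> set us"
    "y1 \<in> set us" "y2 \<in> set us" "y3 \<in> set us" "y4 \<in> set us"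
    using pts by auto
  note ix_pts = ix[OF pts'(1)] ix[OF pts'(2)] ix[OF pts'(3)] ix[OF pts'(4)]
    ix[OF pts'(5)] ix[OF pts'(6)] ix[OF pts'(7)] ix[OF pts'(8)]
  define t where "t = ((ix x1, ix x2, ix x3, ix x4), (ix y1, ix y2, ix y3, ix y4), r, s)"
  have "t \<in> comparisons (length xs)"
    using ix_pts rs unfolding t_def comparisons_def by auto
  moreover have "set xs \<subseteq> {..<M}" "set (map g xs) \<subseteq> {..<M}"
    using xs us g(1) by auto
  ultimately have "comparison_holds \<psi> xs t = comparison_holds \<psi> (map g xs) t"
    using order_invariantD[OF inv xs(1) gxs] xs(3) by simp
  then show ?thesis using ix_pts unfolding t_def by simp
qed

lemma order_invariant_separation:
  fixes \<psi> :: "nat \<times> nat \<Rightarrow> real" and x1 x2 y1 y2 x1' x2' y1' y2' :: nat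
  defines "U \<equiv> {x1, x2, y1, y2, x1', x2', y1', y2'}"
  assumes inv: "order_invariant \<psi> M" and "U \<subseteq> {..<M}" "g ` U \<subseteq> {..<M}" "strict_mono_on U g"
    and fixed: "g x1' = x1'" "g x2' = x2'" "g y1' = y1'" "g y2' = y2'"
    and stretched: "16 * rect_diff \<psi> x1 x2 y1 y2 < rect_diff \<psi> (g x1) (g x2) (g y1) (g y2)"
  shows "4 * rect_diff \<psi> x1' x2' y1' y2' \<le> rect_diff \<psi> x1 x2 y1 y2
    \<or> 4 * rect_diff \<psi> x1 x2 y1 y2 \<le> rect_diff \<psi> x1' x2' y1' y2'"
proof (rule ccontr)
  assume "\<not> ?thesis"
  then have less: "rect_diff \<psi> x1 x2 y1 y2 < 4 * rect_diff \<psi> x1' x2' y1' y2'"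
    "rect_diff \<psi> x1' x2' y1' y2' < 4 * rect_diff \<psi> x1 x2 y1 y2" by auto
  have "4 * rect_diff \<psi> x1' x2' y1' y2' \<le> 1 * rect_diff \<psi> x1 x2 y1 y2 \<longleftrightarrow>
      4 * rect_diff \<psi> (g x1') (g x2') (g y1') (g y2') \<le> 1 * rect_diff \<psi> (g x1) (g x2) (g y1) (g y2)"
    by (rule order_invariant_image[OF inv, where us = "[x1, x2, y1, y2, x1', x2', y1', y2']"])
      (use assms(3-5) in \<open>simp_all add: U_def\<close>)
  then show False using less stretched unfolding fixed by linarith
qed

lemma order_invariant_rect_diff_zero:
  assumes "order_invariant \<psi> M" "rect_diff \<psi> 0 1 2 3 = 0" "4 \<le> M"
    and "x1 < x2" "x2 < x3" "x3 < x4" "x4 < M"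
  shows "rect_diff \<psi> x1 x2 x3 x4 = 0"
proof -
  have "comparison_holds \<psi> [0, 1, 2, 3] ((0, 1, 2, 3), (0, 1, 2, 3), r, s)
      = comparison_holds \<psi> [x1, x2, x3, x4] ((0, 1, 2, 3), (0, 1, 2, 3), r, s)"
    if "r \<in> {0, 1, 4}" "s \<in> {0, 1, 4}" for r s
    by (rule order_invariantD[OF assms(1)]) (use assms(3-) that in \<open>auto simp: comparisons_def\<close>)
  from this[of 0 1] this[of 1 0] show ?thesis using assms(2) by simp
qed

lemma fourfold_growth:
  fixes D :: "nat \<Rightarrow> nat \<Rightarrow> real"
  assumes add: "\<And>x y z. D x z = D x y + D y z"
    and pos: "\<And>x y. p \<le> x \<Longrightarrow> x < y \<Longrightarrow> y \<le> p + 5 \<Longrightarrow> 0 < D x y"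
    and grow: "\<And>b c. p < b \<Longrightarrow> b < c \<Longrightarrow> c \<le> p + 5 \<Longrightarrow> D p b \<le> D b c"
  shows "4 * D p (p + 1) \<le> D (p + 1) (p + 5)"
proof -
  have "D (p + 1) (p + 5)
      = D (p + 1) (p + 2) + D (p + 2) (p + 3) + D (p + 3) (p + 4) + D (p + 4) (p + 5)"
    using add[of "p + 1" "p + 5" "p + 2"]
          add[of "p + 2" "p + 5" "p + 3"] add[of "p + 3" "p + 5" "p + 4"]
    by simp
  moreover have "D p (p + k) = D p (p + 1) + D (p + 1) (p + k)" for k by (rule add)
  moreover have "0 < D (p + 1) (p + 2)" "0 < D (p + 1) (p + 3)" "0 < D (p + 1) (p + 4)"
    by (simp_all add: pos)
  moreover have "D p (p + 1) \<le> D (p + 1) (p + 2)" "D p (p + 2) \<le> D (p + 2) (p + 3)"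
    "D p (p + 3) \<le> D (p + 3) (p + 4)" "D p (p + 4) \<le> D (p + 4) (p + 5)" by (simp_all add: grow)
  ultimately show ?thesis by (smt (verit))
qed

lemma fourfold_decay:
  fixes D :: "nat \<Rightarrow> nat \<Rightarrow> real"
  assumes add: "\<And>x y z. D x z = D x y + D y z"
    and pos: "\<And>x y. p \<le> x \<Longrightarrow> x < y \<Longrightarrow> y \<le> p + 5 \<Longrightarrow> 0 < D x y"
    and decay: "\<And>a b. p \<le> a \<Longrightarrow> a < b \<Longrightarrow> b < p + 5 \<Longrightarrow> D b (p + 5) < D a b"
  shows "4 * D (p + 4) (p + 5) \<le> D p (p + 4)"
proof -
  have "D p (p + 4) = D p (p + 1) + D (p + 1) (p + 2) + D (p + 2) (p + 3) + D (p + 3) (p + 4)"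
    using add[of p "p + 4" "p + 1"] add[of "p + 1" "p + 4" "p + 2"] add[of "p + 2" "p + 4" "p + 3"]
    by simp
  moreover have "D (p + k) (p + 5) = D (p + k) (p + 4) + D (p + 4) (p + 5)" for k by (rule add)
  moreover have "0 < D (p + 1) (p + 4)" "0 < D (p + 2) (p + 4)" "0 < D (p + 3) (p + 4)"
    by (simp_all add: pos)
  moreover have "D (p + 1) (p + 5) < D p (p + 1)" "D (p + 2) (p + 5) < D (p + 1) (p + 2)"
    "D (p + 3) (p + 5) < D (p + 2) (p + 3)" "D (p + 4) (p + 5) < D (p + 3) (p + 4)"
    using decay[of p "p + 1"]
          decay[of "p + 1" "p + 2"] decay[of "p + 2" "p + 3"] decay[of "p + 3" "p + 4"]
    by simp_all
  ultimately show ?thesis by (smt (verit))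
qed

lemma distinct_multiples_10_apart: "10 dvd (a::nat) \<Longrightarrow> 10 dvd c \<Longrightarrow> a \<noteq> c \<Longrightarrow> a + 10 \<le> c \<or> c + 10 \<le> a"
  by (elim dvdE) auto

definition move :: "nat \<Rightarrow> nat \<Rightarrow> nat \<Rightarrow> nat" where
  "move z z' w = (if w = z then z' else w)"

lemma strict_mono_on_move:
  assumes "\<forall>w\<in>U. w \<noteq> z \<longrightarrow> (w < z \<longrightarrow> w < z') \<and> (z < w \<longrightarrow> z' < w)"
  shows "strict_mono_on U (move z z')"
proof (rule strict_mono_onI)
  fix r s assume "r \<in> U" "s \<in> U" "r < s"
  then show "move z z' r < move z z' s"
    using assms unfolding move_def by (cases "r = z"; cases "s = z") auto
qed

(*
  stair_diff psi a b is the sum of rect_diff psi i (i + 1) (j - 1) j over a \<le> i, i + 3 \<le> j \<le> b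
  (cf. stair_diff_rec); up to terms depending only on a or only on b it equals - psi (a, b).
*)
fun diag_sum :: "(nat \<times> nat \<Rightarrow> real) \<Rightarrow> nat \<Rightarrow> real" where
  "diag_sum \<psi> 0 = 0"
| "diag_sum \<psi> (Suc j) = diag_sum \<psi> j + (\<psi> (j - 1, j + 1) - \<psi> (j - 1, j))"

definition stair_diff :: "(nat \<times> nat \<Rightarrow> real) \<Rightarrow> nat \<Rightarrow> nat \<Rightarrow> real" where
  "stair_diff \<psi> a b = \<psi> (a, a + 1) - diag_sum \<psi> (a + 1) + diag_sum \<psi> b - \<psi> (a, b)"

lemma stair_diff_Suc: "stair_diff \<psi> a (a + 1) = 0"
  by (simp add: stair_diff_def)

lemma stair_diff_Suc_Suc: "stair_diff \<psi> a (a + 2) = 0"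
  by (simp add: stair_diff_def numeral_2_eq_2)

lemma stair_diff_rec:
  "stair_diff \<psi> a b = rect_diff \<psi> a (a + 1) (b - 1) b + stair_diff \<psi> (a + 1) b + stair_diff \<psi> a (b - 1)
     - stair_diff \<psi> (a + 1) (b - 1)"
  by (simp add: stair_diff_def rect_diff_def)

section \<open>Normalizing an order-invariant function\<close>

locale positive_order_invariant =
  fixes \<psi> :: "nat \<times> nat \<Rightarrow> real" and M n :: nat
  assumes invariant: "order_invariant \<psi> M"
    and positive: "0 < rect_diff \<psi> 0 1 2 3"
    and large: "10 * n + 12 \<le> M"
begin

lemma rect_diff_pos:
  assumes "x1 < x2" "x2 < x3" "x3 < x4" "x4 < M"
  shows "0 < rect_diff \<psi> x1 x2 x3 x4"
proof -
  have "comparison_holds \<psi> [0, 1, 2, 3] ((0, 1, 2, 3), (0, 1, 2, 3), 0, 1)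
      = comparison_holds \<psi> [x1, x2, x3, x4] ((0, 1, 2, 3), (0, 1, 2, 3), 0, 1)"
    by (rule order_invariantD[OF invariant]) (use assms large in \<open>auto simp: comparisons_def\<close>)
  then show ?thesis using positive by auto
qed

definition "row_growth \<longleftrightarrow> (\<forall>a b c d e. a < b \<longrightarrow> b < c \<longrightarrow> c < d \<longrightarrow> d < e \<longrightarrow> e < M \<longrightarrow>
  4 * rect_diff \<psi> a b d e \<le> rect_diff \<psi> b c d e)"
definition "row_decay \<longleftrightarrow> (\<forall>a b c d e. a < b \<longrightarrow> b < c \<longrightarrow> c < d \<longrightarrow> d < e \<longrightarrow> e < M \<longrightarrow>
  4 * rect_diff \<psi> b c d e \<le> rect_diff \<psi> a b d e)"
definition "col_growth \<longleftrightarrow> (\<forall>a b c d e. a < b \<longrightarrow> b < c \<longrightarrow> c < d \<longrightarrow> d < e \<longrightarrow> e < M \<longrightarrow>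
  4 * rect_diff \<psi> a b c d \<le> rect_diff \<psi> a b d e)"
definition "col_decay \<longleftrightarrow> (\<forall>a b c d e. a < b \<longrightarrow> b < c \<longrightarrow> c < d \<longrightarrow> d < e \<longrightarrow> e < M \<longrightarrow>
  4 * rect_diff \<psi> a b d e \<le> rect_diff \<psi> a b c d)"

lemma comparison_holds_five_points:
  assumes "t \<in> comparisons 5" "a < b" "b < c" "c < d" "d < e" "e < M"
  shows "comparison_holds \<psi> [0, 1, 2, 3, 4] t = comparison_holds \<psi> [a, b, c, d, e] t"
  by (rule order_invariantD[OF invariant]) (use assms large in \<open>auto simp: numeral_eq_Suc\<close>)

lemma row_growth_or_decay: "row_growth \<or> row_decay"
proof -
  let ?D = "\<lambda>x y. rect_diff \<psi> x y 6 7"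
  have add: "?D x z = ?D x y + ?D y z" for x y z by (rule rect_diff_split_rows)
  have pos: "0 < ?D x y" if "0 \<le> x" "x < y" "y \<le> 0 + 5" for x y using that large
    by (intro rect_diff_pos) auto
  let ?t = "((1, 2, 3, 4), (0, 1, 3, 4), 1, 1) :: comparison"
  have t: "?t \<in> comparisons 5" "((1, 2, 3, 4), (0, 1, 3, 4), 1, 4) \<in> comparisons 5"
    "((0, 1, 3, 4), (1, 2, 3, 4), 1, 4) \<in> comparisons 5" by (simp_all add: comparisons_def)
  show ?thesis
  proof (cases "comparison_holds \<psi> [0, 1, 2, 3, 4] ?t")
    case True
    have "?D 0 b \<le> ?D b c" if "0 < b" "b < c" "c \<le> 0 + 5" for b c
      using True comparison_holds_five_points[OF t(1), of 0 b c 6 7] that large by simp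
    then have "4 * ?D 0 1 \<le> ?D 1 5" using fourfold_growth[of ?D 0] add pos by simp
    then have "comparison_holds \<psi> [0, 1, 2, 3, 4] ((1, 2, 3, 4), (0, 1, 3, 4), 1, 4)"
      using comparison_holds_five_points[OF t(2), of 0 1 5 6 7] large by simp
    then have row_growth
      unfolding row_growth_def using comparison_holds_five_points[OF t(2)] by simp
    then show ?thesis ..
  next
    case False
    have "?D b 5 < ?D a b" if "0 \<le> a" "a < b" "b < 0 + 5" for a b
      using False comparison_holds_five_points[OF t(1), of a b 5 6 7] that large by simp
    then have "4 * ?D 4 5 \<le> ?D 0 4" using fourfold_decay[of ?D 0] add pos by simp
    then have "comparison_holds \<psi> [0, 1, 2, 3, 4] ((0, 1, 3, 4), (1, 2, 3, 4), 1, 4)"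
      using comparison_holds_five_points[OF t(3), of 0 4 5 6 7] large by simp
    then have row_decay
      unfolding row_decay_def using comparison_holds_five_points[OF t(3)] by simp
    then show ?thesis ..
  qed
qed

lemma col_growth_or_decay: "col_growth \<or> col_decay"
proof -
  let ?D = "\<lambda>x y. rect_diff \<psi> 0 1 x y"
  have add: "?D x z = ?D x y + ?D y z" for x y z by (rule rect_diff_split_cols)
  have pos: "0 < ?D x y" if "2 \<le> x" "x < y" "y \<le> 2 + 5" for x y using that large
    by (intro rect_diff_pos) auto
  let ?t = "((0, 1, 3, 4), (0, 1, 2, 3), 1, 1) :: comparison"
  have t: "?t \<in> comparisons 5" "((0, 1, 3, 4), (0, 1, 2, 3), 1, 4) \<in> comparisons 5"
    "((0, 1, 2, 3), (0, 1, 3, 4), 1, 4) \<in> comparisons 5" by (simp_all add: comparisons_def)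
  show ?thesis
  proof (cases "comparison_holds \<psi> [0, 1, 2, 3, 4] ?t")
    case True
    have "?D 2 b \<le> ?D b c" if "2 < b" "b < c" "c \<le> 2 + 5" for b c
      using True comparison_holds_five_points[OF t(1), of 0 1 2 b c] that large by simp
    then have "4 * ?D 2 3 \<le> ?D 3 7" using fourfold_growth[of ?D 2] add pos by simp
    then have "comparison_holds \<psi> [0, 1, 2, 3, 4] ((0, 1, 3, 4), (0, 1, 2, 3), 1, 4)"
      using comparison_holds_five_points[OF t(2), of 0 1 2 3 7] large by simp
    then have col_growth
      unfolding col_growth_def using comparison_holds_five_points[OF t(2)] by simp
    then show ?thesis ..
  next
    case False
    have "?D b 7 < ?D a b" if "2 \<le> a" "a < b" "b < 2 + 5" for a b
      using False comparison_holds_five_points[OF t(1), of 0 1 a b 7] that large by simp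
    then have "4 * ?D 6 7 \<le> ?D 2 6" using fourfold_decay[of ?D 2] add pos by simp
    then have "comparison_holds \<psi> [0, 1, 2, 3, 4] ((0, 1, 2, 3), (0, 1, 3, 4), 1, 4)"
      using comparison_holds_five_points[OF t(3), of 0 1 2 6 7] large by simp
    then have col_decay
      unfolding col_decay_def using comparison_holds_five_points[OF t(3)] by simp
    then show ?thesis ..
  qed
qed

(* Spacing 10 leaves room to move one point by 2 without disturbing the other cores. *)
definition "spaced = (\<lambda>i. 10 * i + 10) ` {..<n}"
definition "far = 10 * n + 10"

(* core a b is the unit rectangle at (a, b) on the side towards which rectangle differences grow. *)
definition "row_lo a = (if row_growth then a - 1 else a)"
definition "row_hi a = (if row_growth then a else a + 1)"
definition "col_lo b = (if col_growth then b - 1 else b)"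
definition "col_hi b = (if col_growth then b else b + 1)"
definition "core a b = rect_diff \<psi> (row_lo a) (row_hi a) (col_lo b) (col_hi b)"
definition "row_shift a = (if row_growth then a + 2 else a - 2)"
definition "col_shift b = (if col_growth then b + 2 else b - 2)"

lemma card_spaced: "card spaced = n"
  unfolding spaced_def by (subst card_image) (auto simp: inj_on_def)

lemma spaced_subset: "spaced \<subseteq> {..<M}"
  unfolding spaced_def using large by auto

lemma spaced_pairsD:
  assumes "(a, b) \<in> pairs2 spaced"
  shows "10 \<le> a" "a + 10 \<le> b" "b \<le> 10 * n" "10 dvd a" "10 dvd b"
  using assms unfolding pairs2_def spaced_def by auto

lemma row_decay_if_not_growth: "\<not> row_growth \<Longrightarrow> row_decay"
  using row_growth_or_decay by blast

lemma col_decay_if_not_growth: "\<not> col_growth \<Longrightarrow> col_decay"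
  using col_growth_or_decay by blast

lemma core_pos: "(a, b) \<in> pairs2 spaced \<Longrightarrow> 0 < core a b"
  unfolding core_def using spaced_pairsD[of a b] large
  by (intro rect_diff_pos) (auto simp: row_lo_def row_hi_def col_lo_def col_hi_def)

lemma core_row_stretch:
  assumes "(a, b) \<in> pairs2 spaced"
  shows "21 * core a b \<le> rect_diff \<psi> (move a (row_shift a) (row_lo a)) (move a (row_shift a) (row_hi a))
    (col_lo b) (col_hi b)"
proof -
  note p = spaced_pairsD[OF assms]
  define y1 where "y1 = col_lo b"
  define y2 where "y2 = col_hi b"
  have y: "a + 2 < y1" "y1 < y2" "y2 < M"
    unfolding y1_def y2_def col_lo_def col_hi_def using p large by auto
  show ?thesis
  proof (cases row_growth)
    case True
    have e: "row_lo a = a - 1" "row_hi a = a"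
      "move a (row_shift a) (a - 1) = a - 1" "move a (row_shift a) a = a + 2"
      unfolding row_lo_def row_hi_def move_def row_shift_def using True p by auto
    have "rect_diff \<psi> (a - 1) (a + 2) y1 y2
        = rect_diff \<psi> (a - 1) a y1 y2 + rect_diff \<psi> a (a + 1) y1 y2 + rect_diff \<psi> (a + 1) (a + 2) y1 y2"
      using rect_diff_split_rows[of \<psi> "a - 1" "a + 2" y1 y2 a]
            rect_diff_split_rows[of \<psi> a "a + 2" y1 y2 "a + 1"]
      by simp
    moreover have "4 * rect_diff \<psi> (a - 1) a y1 y2 \<le> rect_diff \<psi> a (a + 1) y1 y2"
      "4 * rect_diff \<psi> a (a + 1) y1 y2 \<le> rect_diff \<psi> (a + 1) (a + 2) y1 y2"
      using True y p unfolding row_growth_def by auto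
    moreover have "0 < rect_diff \<psi> (a - 1) a y1 y2" using y p by (intro rect_diff_pos) auto
    ultimately show ?thesis unfolding core_def e y1_def[symmetric] y2_def[symmetric] by linarith
  next
    case False
    then have decay: row_decay by (rule row_decay_if_not_growth)
    have e: "row_lo a = a" "row_hi a = a + 1"
      "move a (row_shift a) a = a - 2" "move a (row_shift a) (a + 1) = a + 1"
      unfolding row_lo_def row_hi_def move_def row_shift_def using False p by auto
    have "rect_diff \<psi> (a - 2) (a + 1) y1 y2
        = rect_diff \<psi> (a - 2) (a - 1) y1 y2 + rect_diff \<psi> (a - 1) a y1 y2 + rect_diff \<psi> a (a + 1) y1 y2"
      using rect_diff_split_rows[of \<psi> "a - 2" "a + 1" y1 y2 "a - 1"]
            rect_diff_split_rows[of \<psi> "a - 1" "a + 1" y1 y2 a]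
      by simp
    moreover have "4 * rect_diff \<psi> a (a + 1) y1 y2 \<le> rect_diff \<psi> (a - 1) a y1 y2"
      "4 * rect_diff \<psi> (a - 1) a y1 y2 \<le> rect_diff \<psi> (a - 2) (a - 1) y1 y2"
      using decay y p unfolding row_decay_def by (auto simp: numeral_2_eq_2)
    moreover have "0 < rect_diff \<psi> a (a + 1) y1 y2" using y p by (intro rect_diff_pos) auto
    ultimately show ?thesis unfolding core_def e y1_def[symmetric] y2_def[symmetric] by linarith
  qed
qed

lemma core_col_stretch:
  assumes "(a, b) \<in> pairs2 spaced"
  shows "21 * core a b \<le> rect_diff \<psi> (row_lo a) (row_hi a)
    (move b (col_shift b) (col_lo b)) (move b (col_shift b) (col_hi b))"
proof -
  note p = spaced_pairsD[OF assms]
  define x1 where "x1 = row_lo a"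
  define x2 where "x2 = row_hi a"
  have x: "x1 < x2" "x2 + 2 < b" unfolding x1_def x2_def row_lo_def row_hi_def using p by auto
  have bM: "b + 2 < M" using p large by simp
  show ?thesis
  proof (cases col_growth)
    case True
    have e: "col_lo b = b - 1" "col_hi b = b"
      "move b (col_shift b) (b - 1) = b - 1" "move b (col_shift b) b = b + 2"
      unfolding col_lo_def col_hi_def move_def col_shift_def using True p by auto
    have "rect_diff \<psi> x1 x2 (b - 1) (b + 2)
        = rect_diff \<psi> x1 x2 (b - 1) b + rect_diff \<psi> x1 x2 b (b + 1) + rect_diff \<psi> x1 x2 (b + 1) (b + 2)"
      using rect_diff_split_cols[of \<psi> x1 x2 "b - 1" "b + 2" b]
            rect_diff_split_cols[of \<psi> x1 x2 b "b + 2" "b + 1"]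
      by simp
    moreover have "4 * rect_diff \<psi> x1 x2 (b - 1) b \<le> rect_diff \<psi> x1 x2 b (b + 1)"
      "4 * rect_diff \<psi> x1 x2 b (b + 1) \<le> rect_diff \<psi> x1 x2 (b + 1) (b + 2)"
      using True x p bM unfolding col_growth_def by auto
    moreover have "0 < rect_diff \<psi> x1 x2 (b - 1) b" using x p bM by (intro rect_diff_pos) auto
    ultimately show ?thesis unfolding core_def e x1_def[symmetric] x2_def[symmetric] by linarith
  next
    case False
    then have decay: col_decay by (rule col_decay_if_not_growth)
    have e: "col_lo b = b" "col_hi b = b + 1"
      "move b (col_shift b) b = b - 2" "move b (col_shift b) (b + 1) = b + 1"
      unfolding col_lo_def col_hi_def move_def col_shift_def using False p by auto
    have "rect_diff \<psi> x1 x2 (b - 2) (b + 1)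
        = rect_diff \<psi> x1 x2 (b - 2) (b - 1) + rect_diff \<psi> x1 x2 (b - 1) b + rect_diff \<psi> x1 x2 b (b + 1)"
      using rect_diff_split_cols[of \<psi> x1 x2 "b - 2" "b + 1" "b - 1"]
            rect_diff_split_cols[of \<psi> x1 x2 "b - 1" "b + 1" b]
      by simp
    moreover have "4 * rect_diff \<psi> x1 x2 b (b + 1) \<le> rect_diff \<psi> x1 x2 (b - 1) b"
      "4 * rect_diff \<psi> x1 x2 (b - 1) b \<le> rect_diff \<psi> x1 x2 (b - 2) (b - 1)"
      using decay x p bM unfolding col_decay_def by (auto simp: numeral_2_eq_2)
    moreover have "0 < rect_diff \<psi> x1 x2 b (b + 1)" using x p bM by (intro rect_diff_pos) auto
    ultimately show ?thesis unfolding core_def e x1_def[symmetric] x2_def[symmetric] by linarith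
  qed
qed

lemma core_separated:
  assumes P: "(a, b) \<in> pairs2 spaced" and Q: "(a', b') \<in> pairs2 spaced" and "(a, b) \<noteq> (a', b')"
  shows "4 * core a' b' \<le> core a b \<or> 4 * core a b \<le> core a' b'"
proof -
  note p = spaced_pairsD[OF P] and q = spaced_pairsD[OF Q]
  define U where
    "U = {row_lo a, row_hi a, col_lo b, col_hi b, row_lo a', row_hi a', col_lo b', col_hi b'}"
  have UM: "U \<subseteq> {..<M}" unfolding U_def row_lo_def row_hi_def col_lo_def col_hi_def using p q large
    by auto
  have "a < b" "a' < b'" using P Q unfolding pairs2_def by auto
  then have "(a \<noteq> a' \<and> a \<noteq> b') \<or> (b \<noteq> a' \<and> b \<noteq> b')" using assms(3) by auto
  then consider "a \<noteq> a'" "a \<noteq> b'" | "b \<noteq> a'" "b \<noteq> b'" by blast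
  then show ?thesis
  proof cases
    case 1
    define g where "g = move a (row_shift a)"
    have d: "a + 10 \<le> a' \<or> a' + 10 \<le> a" "a + 10 \<le> b' \<or> b' + 10 \<le> a"
      using distinct_multiples_10_apart p(4) q(4,5) 1 by blast+
    have mono: "strict_mono_on U g" unfolding g_def U_def
      by (rule strict_mono_on_move)
        (use p q d in \<open>auto simp: row_lo_def row_hi_def col_lo_def col_hi_def row_shift_def\<close>)
    have img: "g ` U \<subseteq> {..<M}"
      unfolding U_def g_def move_def row_shift_def row_lo_def row_hi_def col_lo_def col_hi_def
      using p q large by auto
    have fixed: "g (row_lo a') = row_lo a'" "g (row_hi a') = row_hi a'" "g (col_lo b') = col_lo b'"
      "g (col_hi b') = col_hi b'" "g (col_lo b) = col_lo b" "g (col_hi b) = col_hi b"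
      unfolding g_def move_def row_lo_def row_hi_def col_lo_def col_hi_def using p q d by auto
    have "16 * core a b < rect_diff \<psi> (g (row_lo a)) (g (row_hi a)) (g (col_lo b)) (g (col_hi b))"
      using core_row_stretch[OF P] core_pos[OF P] fixed unfolding g_def by simp
    then show ?thesis
      using order_invariant_separation[OF invariant UM[unfolded U_def] img[unfolded U_def]
          mono[unfolded U_def] fixed(1-4)]
      unfolding core_def by blast
  next
    case 2
    define g where "g = move b (col_shift b)"
    have d: "b + 10 \<le> a' \<or> a' + 10 \<le> b" "b + 10 \<le> b' \<or> b' + 10 \<le> b"
      using distinct_multiples_10_apart p(5) q(4,5) 2 by blast+
    have mono: "strict_mono_on U g" unfolding g_def U_def
      by (rule strict_mono_on_move)
        (use p q d in \<open>auto simp: row_lo_def row_hi_def col_lo_def col_hi_def col_shift_def\<close>)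
    have img: "g ` U \<subseteq> {..<M}"
      unfolding U_def g_def move_def col_shift_def row_lo_def row_hi_def col_lo_def col_hi_def
      using p q large by auto
    have fixed: "g (row_lo a') = row_lo a'" "g (row_hi a') = row_hi a'" "g (col_lo b') = col_lo b'"
      "g (col_hi b') = col_hi b'" "g (row_lo a) = row_lo a" "g (row_hi a) = row_hi a"
      unfolding g_def move_def row_lo_def row_hi_def col_lo_def col_hi_def using p q d by auto
    have "16 * core a b < rect_diff \<psi> (g (row_lo a)) (g (row_hi a)) (g (col_lo b)) (g (col_hi b))"
      using core_col_stretch[OF P] core_pos[OF P] fixed unfolding g_def by simp
    then show ?thesis
      using order_invariant_separation[OF invariant UM[unfolded U_def] img[unfolded U_def]
          mono[unfolded U_def] fixed(1-4)]
      unfolding core_def by blast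
  qed
qed

lemma stair_diff_mono_left: "a + 2 \<le> b \<Longrightarrow> b < M \<Longrightarrow> stair_diff \<psi> (a + 1) b \<le> stair_diff \<psi> a b"
proof (induction b rule: nat_induct_at_least)
  case base
  then show ?case using stair_diff_Suc[of \<psi> "a + 1"] stair_diff_Suc_Suc[of \<psi> a] by simp
next
  case (Suc b)
  have "0 < rect_diff \<psi> a (a + 1) b (Suc b)" using Suc by (intro rect_diff_pos) auto
  then show ?case using stair_diff_rec[of \<psi> a "Suc b"] Suc by simp
qed

lemma stair_diff_nonneg: "a < b \<Longrightarrow> b < M \<Longrightarrow> 0 \<le> stair_diff \<psi> a b"
proof (induction "b - a" arbitrary: a rule: less_induct)
  case less
  show ?case
  proof (cases "b \<le> a + 2")
    case True
    then have "b = a + 1 \<or> b = a + 2" using less.prems by auto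
    then show ?thesis using stair_diff_Suc stair_diff_Suc_Suc by auto
  next
    case False
    then show ?thesis
      using stair_diff_mono_left[of a b] less.hyps[of "a + 1"] less.prems by fastforce
  qed
qed

lemma stair_diff_ge: "a + 3 \<le> b \<Longrightarrow> b < M \<Longrightarrow> rect_diff \<psi> a (a + 1) (b - 1) b \<le> stair_diff \<psi> a b"
  using stair_diff_rec[of \<psi> a b] stair_diff_nonneg[of "a + 1" b] stair_diff_mono_left[of a "b - 1"]
    by simp

lemma stair_diff_le:
  assumes "row_decay" "col_growth"
  shows "a + 3 \<le> b \<Longrightarrow> b < M \<Longrightarrow> stair_diff \<psi> a b \<le> 2 * rect_diff \<psi> a (a + 1) (b - 1) b"
proof (induction "b - a" arbitrary: a b rule: less_induct)
  case less
  have rec: "stair_diff \<psi> a b = rect_diff \<psi> a (a + 1) (b - 1) b + stair_diff \<psi> (a + 1) b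
      + stair_diff \<psi> a (b - 1) - stair_diff \<psi> (a + 1) (b - 1)"
    by (rule stair_diff_rec)
  have "0 \<le> stair_diff \<psi> (a + 1) (b - 1)" using less.prems by (intro stair_diff_nonneg) auto
  moreover have "0 < rect_diff \<psi> a (a + 1) (b - 1) b" using less.prems by (intro rect_diff_pos) auto
  show ?case
  proof (cases "b = a + 3")
    case True
    then have "b = Suc (Suc (Suc a))" by simp
    then have "stair_diff \<psi> (a + 1) b = 0" "stair_diff \<psi> a (b - 1) = 0"
      using stair_diff_Suc_Suc[of \<psi> "a + 1"] stair_diff_Suc_Suc[of \<psi> a] by simp_all
    then show ?thesis using rec calculation \<open>0 < rect_diff \<psi> a (a + 1) (b - 1) b\<close> by simp
  next
    case False
    then have "a + 1 + 3 \<le> b" "b - (a + 1) < b - a" "a + 3 \<le> b - 1" "b - 1 - a < b - a"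
      using less.prems by auto
    moreover have "b - 1 < M" using less.prems by simp
    ultimately have "stair_diff \<psi> (a + 1) b \<le> 2 * rect_diff \<psi> (a + 1) (a + 1 + 1) (b - 1) b"
      "stair_diff \<psi> a (b - 1) \<le> 2 * rect_diff \<psi> a (a + 1) (b - 1 - 1) (b - 1)"
      using less.hyps[of b "a + 1"] less.hyps[of "b - 1" a] less.prems(2) by blast+
    moreover have "4 * rect_diff \<psi> (a + 1) (a + 1 + 1) (b - 1) b \<le> rect_diff \<psi> a (a + 1) (b - 1) b"
      by (rule assms(1)[unfolded row_decay_def, rule_format]) (use less.prems False in auto)
    moreover have "4 * rect_diff \<psi> a (a + 1) (b - 1 - 1) (b - 1) \<le> rect_diff \<psi> a (a + 1) (b - 1) b"
      by (rule assms(2)[unfolded col_growth_def, rule_format]) (use less.prems False in auto)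
    ultimately show ?thesis using rec \<open>0 \<le> stair_diff \<psi> (a + 1) (b - 1)\<close> by linarith
  qed
qed

lemma comparable_growth_growth:
  assumes "row_growth" "col_growth" "(a, b) \<in> pairs2 spaced"
  shows "core a b \<le> rect_diff \<psi> 0 a (a + 1) b \<and> rect_diff \<psi> 0 a (a + 1) b \<le> 2 * core a b"
proof -
  note p = spaced_pairsD[OF assms(3)]
  have "core a b = rect_diff \<psi> (a - 1) a (b - 1) b"
    unfolding core_def row_lo_def row_hi_def col_lo_def col_hi_def using assms(1,2) by simp
  moreover have "rect_diff \<psi> 0 a (a + 1) b = rect_diff \<psi> 0 (a - 1) (a + 1) b
      + rect_diff \<psi> (a - 1) a (a + 1) (b - 1) + rect_diff \<psi> (a - 1) a (b - 1) b"
    using rect_diff_split_rows[of \<psi> 0 a "a + 1" b "a - 1"]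
          rect_diff_split_cols[of \<psi> "a - 1" a "a + 1" b "b - 1"]
    by simp
  moreover have "4 * rect_diff \<psi> 0 (a - 1) (a + 1) b \<le> rect_diff \<psi> (a - 1) a (a + 1) b"
    by (rule assms(1)[unfolded row_growth_def, rule_format]) (use p large in auto)
  moreover have "4 * rect_diff \<psi> (a - 1) a (a + 1) (b - 1) \<le> rect_diff \<psi> (a - 1) a (b - 1) b"
    by (rule assms(2)[unfolded col_growth_def, rule_format]) (use p large in auto)
  moreover have "rect_diff \<psi> (a - 1) a (a + 1) b
      = rect_diff \<psi> (a - 1) a (a + 1) (b - 1) + rect_diff \<psi> (a - 1) a (b - 1) b"
    by (rule rect_diff_split_cols)
  moreover have "0 < rect_diff \<psi> 0 (a - 1) (a + 1) b" "0 < rect_diff \<psi> (a - 1) a (a + 1) (b - 1)"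
    using p large by (auto intro!: rect_diff_pos)
  ultimately show ?thesis by linarith
qed

lemma comparable_growth_decay:
  assumes "row_growth" "\<not> col_growth" "(a, b) \<in> pairs2 spaced"
  shows "core a b \<le> rect_diff \<psi> 0 a b far \<and> rect_diff \<psi> 0 a b far \<le> 2 * core a b"
proof -
  note p = spaced_pairsD[OF assms(3)]
  have decay: col_decay using assms(2) by (rule col_decay_if_not_growth)
  have far: "b + 1 < far" "far < M" unfolding far_def using p large by auto
  have "core a b = rect_diff \<psi> (a - 1) a b (b + 1)"
    unfolding core_def row_lo_def row_hi_def col_lo_def col_hi_def using assms(1,2) by simp
  moreover have "rect_diff \<psi> 0 a b far = rect_diff \<psi> 0 (a - 1) b far + rect_diff \<psi> (a - 1) a b far"
    by (rule rect_diff_split_rows)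
  moreover have "rect_diff \<psi> (a - 1) a b far
      = rect_diff \<psi> (a - 1) a b (b + 1) + rect_diff \<psi> (a - 1) a (b + 1) far"
    by (rule rect_diff_split_cols)
  moreover have "4 * rect_diff \<psi> 0 (a - 1) b far \<le> rect_diff \<psi> (a - 1) a b far"
    by (rule assms(1)[unfolded row_growth_def, rule_format]) (use p far in auto)
  moreover have "4 * rect_diff \<psi> (a - 1) a (b + 1) far \<le> rect_diff \<psi> (a - 1) a b (b + 1)"
    by (rule decay[unfolded col_decay_def, rule_format]) (use p far in auto)
  moreover have "0 < rect_diff \<psi> 0 (a - 1) b far" "0 < rect_diff \<psi> (a - 1) a (b + 1) far"
    using p far by (auto intro!: rect_diff_pos)
  ultimately show ?thesis by linarith
qed

lemma comparable_decay_decay: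
  assumes "\<not> row_growth" "\<not> col_growth" "(a, b) \<in> pairs2 spaced"
  shows "core a b \<le> rect_diff \<psi> a (b - 1) b far \<and> rect_diff \<psi> a (b - 1) b far \<le> 2 * core a b"
proof -
  note p = spaced_pairsD[OF assms(3)]
  have decay: row_decay col_decay
    using row_decay_if_not_growth[OF assms(1)] col_decay_if_not_growth[OF assms(2)] by auto
  have far: "b + 1 < far" "far < M" unfolding far_def using p large by auto
  have "core a b = rect_diff \<psi> a (a + 1) b (b + 1)"
    unfolding core_def row_lo_def row_hi_def col_lo_def col_hi_def using assms(1,2) by simp
  moreover have "rect_diff \<psi> a (b - 1) b far
      = rect_diff \<psi> a (a + 1) b far + rect_diff \<psi> (a + 1) (b - 1) b far"
    by (rule rect_diff_split_rows)
  moreover have "rect_diff \<psi> a (a + 1) b far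
      = rect_diff \<psi> a (a + 1) b (b + 1) + rect_diff \<psi> a (a + 1) (b + 1) far"
    by (rule rect_diff_split_cols)
  moreover have "4 * rect_diff \<psi> (a + 1) (b - 1) b far \<le> rect_diff \<psi> a (a + 1) b far"
    by (rule decay(1)[unfolded row_decay_def, rule_format]) (use p far in auto)
  moreover have "4 * rect_diff \<psi> a (a + 1) (b + 1) far \<le> rect_diff \<psi> a (a + 1) b (b + 1)"
    by (rule decay(2)[unfolded col_decay_def, rule_format]) (use p far in auto)
  moreover have "0 < rect_diff \<psi> (a + 1) (b - 1) b far" "0 < rect_diff \<psi> a (a + 1) (b + 1) far"
    using p far by (auto intro!: rect_diff_pos)
  ultimately show ?thesis by linarith
qed

lemma comparable_decay_growth:
  assumes "\<not> row_growth" "col_growth" "(a, b) \<in> pairs2 spaced"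
  shows "core a b \<le> stair_diff \<psi> a b \<and> stair_diff \<psi> a b \<le> 2 * core a b"
proof -
  note p = spaced_pairsD[OF assms(3)]
  have "core a b = rect_diff \<psi> a (a + 1) (b - 1) b"
    unfolding core_def row_lo_def row_hi_def col_lo_def col_hi_def using assms(1,2) by simp
  moreover have "a + 3 \<le> b" "b < M" using p large by auto
  ultimately show ?thesis
    using stair_diff_ge stair_diff_le[OF row_decay_if_not_growth[OF assms(1)] assms(2)] by simp
qed

lemma exists_comparable_normalization:
  "\<exists>\<rho>1 \<rho>2 s. (s = 1 \<or> s = -1) \<and> (\<forall>(a, b)\<in>pairs2 spaced.
     core a b \<le> s * (\<psi> (a, b) - \<rho>1 a - \<rho>2 b) \<and> s * (\<psi> (a, b) - \<rho>1 a - \<rho>2 b) \<le> 2 * core a b)"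
proof (cases row_growth; cases col_growth)
  assume "row_growth" "col_growth"
  have "\<psi> (a, b) - (\<psi> (a, a + 1) - \<psi> (0, a + 1)) - \<psi> (0, b) = rect_diff \<psi> 0 a (a + 1) b" for a b
    by (simp add: rect_diff_def)
  then show ?thesis using comparable_growth_growth[OF \<open>row_growth\<close> \<open>col_growth\<close>]
    by (intro exI[of _ "\<lambda>a. \<psi> (a, a + 1) - \<psi> (0, a + 1)"] exI[of _ "\<lambda>b. \<psi> (0, b)"] exI[of _ 1]) auto
next
  assume "row_growth" "\<not> col_growth"
  have "- (\<psi> (a, b) - \<psi> (a, far) - (\<psi> (0, b) - \<psi> (0, far))) = rect_diff \<psi> 0 a b far" for a b
    by (simp add: rect_diff_def)
  then show ?thesis using comparable_growth_decay[OF \<open>row_growth\<close> \<open>\<not> col_growth\<close>]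
    by (intro exI[of _ "\<lambda>a. \<psi> (a, far)"] exI[of _ "\<lambda>b. \<psi> (0, b) - \<psi> (0, far)"] exI[of _ "-1"]) auto
next
  assume "\<not> row_growth" "col_growth"
  have "- (\<psi> (a, b) - (\<psi> (a, a + 1) - diag_sum \<psi> (a + 1)) - diag_sum \<psi> b) = stair_diff \<psi> a b" for a b
    by (simp add: stair_diff_def)
  then show ?thesis using comparable_decay_growth[OF \<open>\<not> row_growth\<close> \<open>col_growth\<close>]
    by (intro exI[of _ "\<lambda>a. \<psi> (a, a + 1) - diag_sum \<psi> (a + 1)"] exI[of _ "diag_sum \<psi>"]
        exI[of _ "-1"]) auto
next
  assume "\<not> row_growth" "\<not> col_growth"
  have "\<psi> (a, b) - \<psi> (a, far) - (\<psi> (b - 1, b) - \<psi> (b - 1, far)) = rect_diff \<psi> a (b - 1) b far" for a b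
    by (simp add: rect_diff_def)
  then show ?thesis using comparable_decay_decay[OF \<open>\<not> row_growth\<close> \<open>\<not> col_growth\<close>]
    by (intro exI[of _ "\<lambda>a. \<psi> (a, far)"] exI[of _ "\<lambda>b. \<psi> (b - 1, b) - \<psi> (b - 1, far)"] exI[of _ 1]) auto
qed

lemma exists_exp_separated_normalization:
  "\<exists>\<rho>1 \<rho>2. exp_separated (pairs2 spaced) (\<lambda>(i, j). \<psi> (i, j) - \<rho>1 i - \<rho>2 j)"
proof -
  obtain \<rho>1 \<rho>2 s where "s = 1 \<or> s = -1" and bounds: "\<forall>(a, b)\<in>pairs2 spaced.
      core a b \<le> s * (\<psi> (a, b) - \<rho>1 a - \<rho>2 b) \<and> s * (\<psi> (a, b) - \<rho>1 a - \<rho>2 b) \<le> 2 * core a b"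
    using exists_comparable_normalization by blast
  moreover have "\<forall>P\<in>pairs2 spaced. \<forall>Q\<in>pairs2 spaced. P \<noteq> Q \<longrightarrow>
      4 * case_prod core Q \<le> case_prod core P \<or> 4 * case_prod core P \<le> case_prod core Q"
    using core_separated by auto
  ultimately have "exp_separated (pairs2 spaced) (\<lambda>(i, j). \<psi> (i, j) - \<rho>1 i - \<rho>2 j)"
    by (intro exp_separated_if_comparable[where c = "case_prod core" and s = s]) auto
  then show ?thesis by blast
qed

end

lemma order_invariant_zero_normalization:
  assumes "order_invariant \<psi> M" "rect_diff \<psi> 0 1 2 3 = 0" "4 \<le> M" "n + 2 \<le> M"
  shows "\<exists>I \<subseteq> {..<M}. card I = n \<and> (\<exists>\<rho>1 \<rho>2. exp_separated (pairs2 I) (\<lambda>(i, j). \<psi> (i, j) - \<rho>1 i - \<rho>2 j))"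
proof -
  define T where "T = n + 1"
  have "\<psi> (a, b) - \<psi> (a, T) - (\<psi> (0, b) - \<psi> (0, T)) = 0" if "(a, b) \<in> pairs2 {1..n}" for a b
  proof -
    have "rect_diff \<psi> 0 a b T = 0"
      using that assms(4) unfolding pairs2_def T_def
        by (intro order_invariant_rect_diff_zero[OF assms(1-3)]) auto
    then show ?thesis by (simp add: rect_diff_def)
  qed
  then have "exp_separated (pairs2 {1..n}) (\<lambda>(i, j). \<psi> (i, j) - \<psi> (i, T) - (\<psi> (0, j) - \<psi> (0, T)))"
    by (intro exp_separated_zero) auto
  moreover have "{1..n} \<subseteq> {..<M}" "card {1..n} = n" using assms(4) by auto
  ultimately show ?thesis
    by (intro exI[of _ "{1..n}"] conjI exI[of _ "\<lambda>i. \<psi> (i, T)"]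
        exI[of _ "\<lambda>j. \<psi> (0, j) - \<psi> (0, T)"]) simp_all
qed

lemma order_invariant_normalization:
  assumes "order_invariant \<psi> M" "10 * n + 12 \<le> M"
  shows "\<exists>I \<subseteq> {..<M}. card I = n \<and> (\<exists>\<rho>1 \<rho>2. exp_separated (pairs2 I) (\<lambda>(i, j). \<psi> (i, j) - \<rho>1 i - \<rho>2 j))"
proof -
  consider "0 < rect_diff \<psi> 0 1 2 3" | "rect_diff \<psi> 0 1 2 3 < 0" | "rect_diff \<psi> 0 1 2 3 = 0"
    by linarith
  then show ?thesis
  proof cases
    case 1
    interpret positive_order_invariant \<psi> M n using assms 1 by unfold_locales
    show ?thesis using spaced_subset card_spaced exists_exp_separated_normalization by blast
  next
    case 2
    interpret positive_order_invariant "\<lambda>p. - \<psi> p" M n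
      using order_invariant_uminus[OF assms(1)] assms(2) 2 rect_diff_uminus[of \<psi>]
        by unfold_locales auto
    obtain \<rho>1 \<rho>2 where sep: "exp_separated (pairs2 spaced) (\<lambda>(i, j). - \<psi> (i, j) - \<rho>1 i - \<rho>2 j)"
      using exists_exp_separated_normalization by blast
    have "(\<lambda>(i, j). \<psi> (i, j) - (- \<rho>1 i) - (- \<rho>2 j)) = (\<lambda>p. - (\<lambda>(i, j). - \<psi> (i, j) - \<rho>1 i - \<rho>2 j) p)"
      by (auto simp: fun_eq_iff)
    then have "exp_separated (pairs2 spaced) (\<lambda>(i, j). \<psi> (i, j) - (- \<rho>1 i) - (- \<rho>2 j))"
      using exp_separated_uminus[OF sep] by simp
    then show ?thesis using spaced_subset card_spaced
      by (intro exI[of _ spaced] conjI exI[of _ "\<lambda>i. - \<rho>1 i"] exI[of _ "\<lambda>j. - \<rho>2 j"]) simp_all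
  next
    case 3
    then show ?thesis using assms by (intro order_invariant_zero_normalization) auto
  qed
qed

theorem lemma4p1:
  shows "\<exists>C::real. C > 0 \<and>
    (\<forall>(n::nat) (N::nat) (\<phi>::nat \<times> nat \<Rightarrow> real).
       n \<ge> 1 \<longrightarrow> real N \<ge> tw 8 (C * real n ^ 3) \<longrightarrow>
       (\<exists>S \<sigma>. S \<subseteq> {1..N} \<and> card S = n \<and>
          equiv_on S \<sigma> \<phi> \<and> exp_separated (pairs2 S) \<sigma>))"
proof -
  define c where "c = card (Pow (comparisons 8))"
  have "1 \<le> c" unfolding c_def using finite_comparisons by (simp add: card_Pow)
  then obtain B where B: "1 \<le> B" "\<forall>m\<ge>1. ramsey_bound c 8 m \<le> tower 7 (B * m)"
    using ramsey_bound_le_tower[of c 7] by auto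
  show ?thesis
  proof (intro exI[of _ "30 * real B"] conjI allI impI)
    show "0 < 30 * real B" using B(1) by simp
    fix n N :: nat and \<phi> :: "nat \<times> nat \<Rightarrow> real"
    assume n: "1 \<le> n" and N: "tw 8 (30 * real B * real n ^ 3) \<le> real N"
    define m where "m = 10 * n + 20"
    have "1 \<le> real n" "real n \<le> real n ^ 3" using n by (auto intro: self_le_power)
    moreover have "real m = 10 * real n + 20" unfolding m_def by simp
    ultimately have "real m \<le> 30 * real n ^ 3" by linarith
    then have "real (B * m) \<le> 30 * real B * real n ^ 3"
      using mult_left_mono[of "real m" "30 * real n ^ 3" "real B"] by simp
    moreover have "(8::nat) = Suc 7" by simp
    ultimately have "tower 7 (B * m) \<le> N" using N by (metis tower_le_of_tw_le)
    moreover have "ramsey_bound c 8 m \<le> tower 7 (B * m)" using B(2) unfolding m_def by simp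
    ultimately have "ramsey_bound c 8 m \<le> card {1..N}" by simp
    moreover have colours: "range (comparison_type \<phi>) \<subseteq> Pow (comparisons 8)"
      by (auto simp: comparison_type_def)
    have "finite (Pow (comparisons 8))" using finite_comparisons by simp
    then have "finite (range (comparison_type \<phi>))" "card (range (comparison_type \<phi>)) \<le> c"
      unfolding c_def using colours by (rule finite_subset[rotated], rule card_mono)
    ultimately obtain H where H: "H \<subseteq> {1..N}" "card H = m"
      "\<forall>Y\<in>nsets H 8. \<forall>Y'\<in>nsets H 8. comparison_type \<phi> Y = comparison_type \<phi> Y'"
      using ramsey_explicit[of "comparison_type \<phi>" c 8 "{1..N}" m] by auto
    define h where "h = (!) (sorted_list_of_set H)"
    have fin: "finite H" using H(1) finite_subset by blast
    have "order_invariant (\<lambda>(i, j). \<phi> (h i, h j)) (m - 8)"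
      unfolding h_def by (rule order_invariant_if_homogeneous[OF fin H(2) _ H(3)]) (simp add: m_def)
    moreover have "10 * n + 12 \<le> m - 8" unfolding m_def by simp
    ultimately obtain I \<rho>1 \<rho>2 where I: "I \<subseteq> {..<m - 8}" "card I = n"
      and sep: "exp_separated (pairs2 I) (\<lambda>(i, j). \<phi> (h i, h j) - \<rho>1 i - \<rho>2 j)"
      by (auto dest!: order_invariant_normalization)
    have "I \<subseteq> {..<card H}" using I(1) H(2) by auto
    then have mono: "strict_mono_on I h"
      unfolding h_def
        by (rule monotone_on_subset[OF strict_mono_on_nth_sorted_list_of_set(1)[OF fin]])
    have "h ` I \<subseteq> H"
      unfolding h_def using strict_mono_on_nth_sorted_list_of_set(2)[OF fin] \<open>I \<subseteq> {..<card H}\<close>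
        by blast
    obtain \<sigma> where "equiv_on (h ` I) \<sigma> \<phi>" "exp_separated (pairs2 (h ` I)) \<sigma>"
      using equiv_exp_separated_image[OF mono sep] by blast
    moreover have "h ` I \<subseteq> {1..N}" using \<open>h ` I \<subseteq> H\<close> H(1) by blast
    moreover have "card (h ` I) = n" using card_image[OF strict_mono_on_imp_inj_on[OF mono]] I(2)
      by simp
    ultimately show "\<exists>S \<sigma>. S \<subseteq> {1..N} \<and> card S = n \<and> equiv_on S \<sigma> \<phi> \<and> exp_separated (pairs2 S) \<sigma>"
      by blast
  qed
qed

end
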